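(* Let $\mathcal M=(G,In,Out,Leak)$, $G=(V,E)$, be a strongly connected linear compartmental model with $|In|=|Out|=1$. Let $n$ be the number of compartments and $L$ the length of a shortest directed path in $G$ from the input compartment to the output compartment. If one of the following holds: (1) $Leak\ne\emptyset$, $In=Out$, and $|E|+|Leak|>2n-1$; (2) $Leak\ne\emptyset$, $In\ne Out$, and $|E|+|Leak|>2n-L$; (3) $Leak=\emptyset$, $In=Out$, and $|E|>2n-2$; or (4) $Leak=\emptyset$, $In\ne Out$, and $|E|>2n-L-1$, then $\mathcal M$ is unidentifiable.
   Context: A linear compartmental model $\mathcal M=(G,In,Out,Leak)$ consists of a finite directed graph $G=(V,E)$ without multi-edges, compartments $V=\{1,\dots,n\}$, and subsets $In,Out,Leak\subseteq V$; edge $k\to \ell$ carries parameter $a_{\ell k}$ and each $\ell\in Leak$ carries $a_{0\ell}$. The compartmental matrix $A$ has $A_{\ell\ell}=-\sum_{k:\,\ell\to k\in E}a_{k\ell}$ (minus $a_{0\ell}$ if $\ell\in Leak$), $A_{\ell k}=a_{\ell k}$ if $k\to\ell\in E$, $0$ otherwise. With $B^{p,q}$ denoting removal of row $p$ and column $q$ and $\partial I$ the diagonal matrix of $d/dt$'s, the input-output equations are $\det(\partial I-A)y_i=\sum_{j\in In}(-1)^{i+j}\det((\partial I-A)^{j,i})u_j$ ($i\in Out$). The coefficient map $c:\mathbb R^{|E|+|Leak|}\to\mathbb R^m$ sends the parameters to all non-constant coefficients (polynomials in the parameters) of these equations. The model is unidentifiable if $c$ is generically infinite-to-one. *)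

theory Defs
  imports "HOL-Library.FuncSet" "HOL-Computational_Algebra.Polynomial"
    "Jordan_Normal_Form.Determinant"
begin

text \<open>Linear compartmental models (G, In, Out, Leak), G = (V, E), with compartments
  V = {1..n}.  An edge k \<rightarrow> l is the pair (k, l) in E.\<close>

definition compartmental_model ::
  "nat \<Rightarrow> (nat \<times> nat) set \<Rightarrow> nat set \<Rightarrow> nat set \<Rightarrow> nat set \<Rightarrow> bool" where
  "compartmental_model n E Inp Outp Lk \<longleftrightarrow>
     E \<subseteq> {1..n} \<times> {1..n} \<and> (\<forall>k. (k, k) \<notin> E) \<and>
     Inp \<subseteq> {1..n} \<and> Outp \<subseteq> {1..n} \<and> Lk \<subseteq> {1..n}"

definition strongly_connected :: "nat \<Rightarrow> (nat \<times> nat) set \<Rightarrow> bool" where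
  "strongly_connected n E \<longleftrightarrow> (\<forall>u\<in>{1..n}. \<forall>v\<in>{1..n}. (u, v) \<in> E\<^sup>*)"

definition shortest_path_length :: "(nat \<times> nat) set \<Rightarrow> nat \<Rightarrow> nat \<Rightarrow> nat" where
  "shortest_path_length E u v = (LEAST k. (u, v) \<in> E ^^ k)"

text \<open>Parameters: EdgeP k l is a_{lk} (for the edge k \<rightarrow> l), LeakP l is a_{0l}.\<close>
datatype param = EdgeP nat nat | LeakP nat

definition param_labels :: "(nat \<times> nat) set \<Rightarrow> nat set \<Rightarrow> param set" where
  "param_labels E Lk = (\<lambda>(k, l). EdgeP k l) ` E \<union> LeakP ` Lk"

text \<open>Parameter space R^{|E|+|Leak|}: real vectors indexed by the parameter labels.\<close>
definition param_space :: "(nat \<times> nat) set \<Rightarrow> nat set \<Rightarrow> (param \<Rightarrow> real) set" where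
  "param_space E Lk = param_labels E Lk \<rightarrow>\<^sub>E (UNIV :: real set)"

text \<open>Compartmental matrix A (row/column l of the paper is index l - 1).\<close>
definition comp_matrix ::
  "nat \<Rightarrow> (nat \<times> nat) set \<Rightarrow> nat set \<Rightarrow> (param \<Rightarrow> real) \<Rightarrow> real mat" where
  "comp_matrix n E Lk \<theta> = mat n n (\<lambda>(r, c).
     let l = r + 1; k = c + 1 in
     if l = k then - (\<Sum>m\<in>{m. (l, m) \<in> E}. \<theta> (EdgeP l m))
                   - (if l \<in> Lk then \<theta> (LeakP l) else 0)
     else if (k, l) \<in> E then \<theta> (EdgeP k l) else 0)"

text \<open>The matrix \<partial>I - A, with \<partial> rendered as the polynomial variable.\<close>
definition dI_minus_A ::
  "nat \<Rightarrow> (nat \<times> nat) set \<Rightarrow> nat set \<Rightarrow> (param \<Rightarrow> real) \<Rightarrow> real poly mat" where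
  "dI_minus_A n E Lk \<theta> = mat n n (\<lambda>(r, c).
     (if r = c then [:0, 1:] else 0) - [: comp_matrix n E Lk \<theta> $$ (r, c) :])"

text \<open>Coefficients of the input-output equations, indexed by (i, None, k) for the
  coefficient of d^k y_i on the left-hand side of the equation for output i, and
  (i, Some j, k) for the coefficient of d^k u_j on its right-hand side.\<close>
definition io_coeff ::
  "nat \<Rightarrow> (nat \<times> nat) set \<Rightarrow> nat set \<Rightarrow> nat \<times> nat option \<times> nat \<Rightarrow> (param \<Rightarrow> real) \<Rightarrow> real" where
  "io_coeff n E Lk idx \<theta> = (case idx of
      (i, None, k) \<Rightarrow> coeff (det (dI_minus_A n E Lk \<theta>)) k
    | (i, Some j, k) \<Rightarrow>
        coeff ((-1) ^ (i + j) * det (mat_delete (dI_minus_A n E Lk \<theta>) (j - 1) (i - 1))) k)"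

definition io_coeff_indices :: "nat \<Rightarrow> nat set \<Rightarrow> nat set \<Rightarrow> (nat \<times> nat option \<times> nat) set" where
  "io_coeff_indices n Inp Outp = Outp \<times> (insert None (Some ` Inp)) \<times> {0..n}"

definition nonconst_indices ::
  "nat \<Rightarrow> (nat \<times> nat) set \<Rightarrow> nat set \<Rightarrow> nat set \<Rightarrow> nat set \<Rightarrow> (nat \<times> nat option \<times> nat) set" where
  "nonconst_indices n E Inp Outp Lk = {idx \<in> io_coeff_indices n Inp Outp.
      \<exists>\<theta>\<in>param_space E Lk. \<exists>\<theta>'\<in>param_space E Lk. io_coeff n E Lk idx \<theta> \<noteq> io_coeff n E Lk idx \<theta>'}"

definition coeff_map ::
  "nat \<Rightarrow> (nat \<times> nat) set \<Rightarrow> nat set \<Rightarrow> nat set \<Rightarrow> nat set \<Rightarrow> (param \<Rightarrow> real)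
     \<Rightarrow> (nat \<times> nat option \<times> nat \<Rightarrow> real)" where
  "coeff_map n E Inp Outp Lk \<theta> =
     restrict (\<lambda>idx. io_coeff n E Lk idx \<theta>) (nonconst_indices n E Inp Outp Lk)"

inductive poly_fun :: "param set \<Rightarrow> ((param \<Rightarrow> real) \<Rightarrow> real) \<Rightarrow> bool" for P where
  pf_const: "poly_fun P (\<lambda>\<theta>. c)"
| pf_var: "x \<in> P \<Longrightarrow> poly_fun P (\<lambda>\<theta>. \<theta> x)"
| pf_add: "poly_fun P f \<Longrightarrow> poly_fun P g \<Longrightarrow> poly_fun P (\<lambda>\<theta>. f \<theta> + g \<theta>)"
| pf_mult: "poly_fun P f \<Longrightarrow> poly_fun P g \<Longrightarrow> poly_fun P (\<lambda>\<theta>. f \<theta> * g \<theta>)"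

definition generically ::
  "(nat \<times> nat) set \<Rightarrow> nat set \<Rightarrow> ((param \<Rightarrow> real) \<Rightarrow> bool) \<Rightarrow> bool" where
  "generically E Lk Q \<longleftrightarrow> (\<exists>f. poly_fun (param_labels E Lk) f \<and>
      (\<exists>\<theta>\<in>param_space E Lk. f \<theta> \<noteq> 0) \<and>
      (\<forall>\<theta>\<in>param_space E Lk. f \<theta> \<noteq> 0 \<longrightarrow> Q \<theta>))"

definition unidentifiable ::
  "nat \<Rightarrow> (nat \<times> nat) set \<Rightarrow> nat set \<Rightarrow> nat set \<Rightarrow> nat set \<Rightarrow> bool" where
  "unidentifiable n E Inp Outp Lk \<longleftrightarrow> generically E Lk (\<lambda>\<theta>.
     infinite {\<theta>' \<in> param_space E Lk.
        coeff_map n E Inp Outp Lk \<theta>' = coeff_map n E Inp Outp Lk \<theta>})"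

end

theory Submission
  imports Defs "Jordan_Normal_Form.Char_Poly" "HOL-Combinatorics.Orbits"
begin

(* The coefficient map is polynomial in the |E| + |Leak| parameters, so it suffices to show that
   it has fewer non-constant components than there are parameters: a polynomial map with fewer
   components than variables has infinite generic fibres.  For the latter, take a nonvanishing
   Jacobian minor of maximal size and a further parameter j outside its columns; near a point where
   the minor does not vanish, a Newton iteration moves the parameters of the minor so as to keep
   its components fixed while parameter j varies, and the vanishing of all bordered minors forces
   the remaining components to have quadratically small increments along this curve, hence to be
   constant on it.

   For the count, det(dI - A) is monic of degree n and, without leaks, has zero constant term since
   the columns of A then sum to zero.  If In = Out the right-hand side is a principal minor, monic
   of degree n - 1.  If In <> Out, each permutation term of the off-diagonal minor follows a cycle
   that traces a path from input to output, which costs at least L + 1 factors of degree zero, so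
   only the coefficients of degree below n - L can vary.  This leaves at most 2n - 1, 2n - L,
   2n - 2 or 2n - L - 1 non-constant coefficients in the four cases. *)

section \<open>Subrings of a function ring\<close>

definition fun_subring :: "(('x \<Rightarrow> 'a::comm_ring_1) \<Rightarrow> bool) \<Rightarrow> bool" where
  "fun_subring Q \<longleftrightarrow> (\<forall>c. Q (\<lambda>_. c)) \<and>
     (\<forall>f g. Q f \<longrightarrow> Q g \<longrightarrow> Q (\<lambda>x. f x + g x)) \<and> (\<forall>f g. Q f \<longrightarrow> Q g \<longrightarrow> Q (\<lambda>x. f x * g x))"

context
  fixes Q :: "('x \<Rightarrow> 'a::comm_ring_1) \<Rightarrow> bool"
  assumes Q: "fun_subring Q"
begin

lemma fun_subring_const: "Q (\<lambda>_. c)"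
  using Q unfolding fun_subring_def by blast

lemma fun_subring_add: "Q f \<Longrightarrow> Q g \<Longrightarrow> Q (\<lambda>x. f x + g x)"
  using Q unfolding fun_subring_def by blast

lemma fun_subring_mult: "Q f \<Longrightarrow> Q g \<Longrightarrow> Q (\<lambda>x. f x * g x)"
  using Q unfolding fun_subring_def by blast

lemma fun_subring_uminus: "Q f \<Longrightarrow> Q (\<lambda>x. - f x)"
  using fun_subring_mult[OF fun_subring_const[of "-1"], of f] by simp

lemma fun_subring_diff: "Q f \<Longrightarrow> Q g \<Longrightarrow> Q (\<lambda>x. f x - g x)"
  using fun_subring_add[OF _ fun_subring_mult[OF fun_subring_const[of "-1"]], of f g] by simp

lemma fun_subring_sum:
  "finite S \<Longrightarrow> (\<And>s. s \<in> S \<Longrightarrow> Q (f s)) \<Longrightarrow> Q (\<lambda>x. \<Sum>s\<in>S. f s x)"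
  by (induction S rule: finite_induct) (auto intro: fun_subring_const fun_subring_add)

lemma fun_subring_prod:
  "finite S \<Longrightarrow> (\<And>s. s \<in> S \<Longrightarrow> Q (f s)) \<Longrightarrow> Q (\<lambda>x. \<Prod>s\<in>S. f s x)"
  by (induction S rule: finite_induct) (auto intro: fun_subring_const fun_subring_mult)

lemma fun_subring_det:
  assumes "\<And>x. M x \<in> carrier_mat n n" and "\<And>a b. a < n \<Longrightarrow> b < n \<Longrightarrow> Q (\<lambda>x. M x $$ (a, b))"
  shows "Q (\<lambda>x. det (M x))"
proof -
  have "Q (\<lambda>x. \<Sum>p\<in>{p. p permutes {0..<n}}. signof p * (\<Prod>i = 0..<n. M x $$ (i, p i)))"
    by (intro fun_subring_sum fun_subring_mult fun_subring_const fun_subring_prod assms)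
       (auto simp: finite_permutations permutes_in_image)
  then show ?thesis using det_def'[OF assms(1)] by simp
qed

lemma fun_subring_det_mat_delete:
  assumes "\<And>x. M x \<in> carrier_mat n n" and "\<And>a b. a < n \<Longrightarrow> b < n \<Longrightarrow> Q (\<lambda>x. M x $$ (a, b))"
  shows "Q (\<lambda>x. det (mat_delete (M x) a b))"
proof (rule fun_subring_det)
  show "mat_delete (M x) a b \<in> carrier_mat (n - 1) (n - 1)" for x
    using mat_delete_carrier[OF assms(1)] .
  fix a' b' assume ab': "a' < n - 1" "b' < n - 1"
  have "(\<lambda>x. mat_delete (M x) a b $$ (a', b'))
      = (\<lambda>x. M x $$ (if a' < a then a' else Suc a', if b' < b then b' else Suc b'))"
  proof
    fix x
    have "dim_row (M x) = n" "dim_col (M x) = n" using assms(1)[of x] by auto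
    then show "mat_delete (M x) a b $$ (a', b')
        = M x $$ (if a' < a then a' else Suc a', if b' < b then b' else Suc b')"
      using ab' by (simp add: mat_delete_def)
  qed
  then show "Q (\<lambda>x. mat_delete (M x) a b $$ (a', b'))"
    using assms(2) ab' by simp
qed

lemma fun_subring_adj_mat_entry:
  assumes "\<And>x. M x \<in> carrier_mat n n" and "\<And>a b. a < n \<Longrightarrow> b < n \<Longrightarrow> Q (\<lambda>x. M x $$ (a, b))"
    and "a < n" "b < n"
  shows "Q (\<lambda>x. adj_mat (M x) $$ (a, b))"
proof -
  have "adj_mat (M x) $$ (a, b) = (-1) ^ (b + a) * det (mat_delete (M x) b a)" for x
    using assms(1)[of x] assms(3,4) by (simp add: adj_mat_def cofactor_def carrier_matD)
  then show ?thesis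
    using fun_subring_mult[OF fun_subring_const fun_subring_det_mat_delete[OF assms(1,2)]] by simp
qed

end

lemma fun_subring_poly_fun: "fun_subring (poly_fun P)"
  unfolding fun_subring_def by (auto intro: poly_fun.intros)

section \<open>Polynomial expressions and Taylor bounds\<close>

datatype 'v pexpr = PConst real | PVar 'v | PAdd "'v pexpr" "'v pexpr" | PMult "'v pexpr" "'v pexpr"

primrec peval :: "'v pexpr \<Rightarrow> ('v \<Rightarrow> real) \<Rightarrow> real" where
  "peval (PConst c) x = c"
| "peval (PVar v) x = x v"
| "peval (PAdd a b) x = peval a x + peval b x"
| "peval (PMult a b) x = peval a x * peval b x"

primrec pvars :: "'v pexpr \<Rightarrow> 'v set" where
  "pvars (PConst c) = {}"
| "pvars (PVar v) = {v}"
| "pvars (PAdd a b) = pvars a \<union> pvars b"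
| "pvars (PMult a b) = pvars a \<union> pvars b"

primrec pdiff :: "'v \<Rightarrow> 'v pexpr \<Rightarrow> 'v pexpr" where
  "pdiff v (PConst c) = PConst 0"
| "pdiff v (PVar w) = PConst (if v = w then 1 else 0)"
| "pdiff v (PAdd a b) = PAdd (pdiff v a) (pdiff v b)"
| "pdiff v (PMult a b) = PAdd (PMult (pdiff v a) b) (PMult a (pdiff v b))"

lemma pvars_pdiff: "pvars (pdiff v e) \<subseteq> pvars e"
  by (induction e) auto

lemma poly_fun_peval: "pvars e \<subseteq> P \<Longrightarrow> poly_fun P (peval e)"
proof (induction e)
  case (PConst c)
  then show ?case using pf_const[of P c] by simp
next
  case (PVar v)
  then show ?case using pf_var[of v P] by simp
next
  case (PAdd a b)
  then show ?case using pf_add[of P "peval a" "peval b"] by simp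
next
  case (PMult a b)
  then show ?case using pf_mult[of P "peval a" "peval b"] by simp
qed

lemma poly_fun_iff_peval: "poly_fun P f \<longleftrightarrow> (\<exists>e. pvars e \<subseteq> P \<and> f = peval e)"
proof
  show "poly_fun P f \<Longrightarrow> \<exists>e. pvars e \<subseteq> P \<and> f = peval e"
  proof (induction rule: poly_fun.induct)
    case (pf_const c)
    show ?case by (rule exI[of _ "PConst c"]) auto
  next
    case (pf_var v)
    then show ?case by (intro exI[of _ "PVar v"]) auto
  next
    case (pf_add f g)
    then obtain a b where "pvars a \<subseteq> P" "f = peval a" "pvars b \<subseteq> P" "g = peval b" by blast
    then show ?case by (intro exI[of _ "PAdd a b"]) auto
  next
    case (pf_mult f g)
    then obtain a b where "pvars a \<subseteq> P" "f = peval a" "pvars b \<subseteq> P" "g = peval b" by blast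
    then show ?case by (intro exI[of _ "PMult a b"]) auto
  qed
qed (auto intro: poly_fun_peval)

definition l1_dist :: "'a set \<Rightarrow> ('a \<Rightarrow> real) \<Rightarrow> ('a \<Rightarrow> real) \<Rightarrow> real" where
  "l1_dist S u v = (\<Sum>x\<in>S. \<bar>u x - v x\<bar>)"

lemma l1_dist_nonneg: "l1_dist S u v \<ge> 0"
  unfolding l1_dist_def by (auto intro: sum_nonneg)

lemma l1_dist_self: "l1_dist S u u = 0"
  unfolding l1_dist_def by simp

lemma l1_dist_commute: "l1_dist S u v = l1_dist S v u"
  unfolding l1_dist_def by (simp add: abs_minus_commute)

lemma l1_dist_triangle: "l1_dist S u w \<le> l1_dist S u v + l1_dist S v w"
  unfolding l1_dist_def sum.distrib[symmetric] by (rule sum_mono) auto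

lemma l1_dist_cong: "(\<And>x. x \<in> S \<Longrightarrow> u x = u' x) \<Longrightarrow> (\<And>x. x \<in> S \<Longrightarrow> v x = v' x) \<Longrightarrow>
    l1_dist S u v = l1_dist S u' v'"
  unfolding l1_dist_def by (rule sum.cong) auto

lemma abs_le_l1_dist: "finite S \<Longrightarrow> x \<in> S \<Longrightarrow> \<bar>u x - v x\<bar> \<le> l1_dist S u v"
  unfolding l1_dist_def by (rule member_le_sum) auto

definition dir_deriv :: "'v set \<Rightarrow> 'v pexpr \<Rightarrow> ('v \<Rightarrow> real) \<Rightarrow> ('v \<Rightarrow> real) \<Rightarrow> real" where
  "dir_deriv P e u w = (\<Sum>p\<in>P. peval (pdiff p e) u * w p)"

definition lipschitz_near :: "'v set \<Rightarrow> ('v \<Rightarrow> real) \<Rightarrow> real \<Rightarrow> (('v \<Rightarrow> real) \<Rightarrow> real) \<Rightarrow> bool" where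
  "lipschitz_near P \<theta> K f \<longleftrightarrow> (\<forall>u v. l1_dist P u \<theta> \<le> 1 \<longrightarrow> l1_dist P v \<theta> \<le> 1 \<longrightarrow>
      \<bar>f v\<bar> \<le> K \<and> \<bar>f v - f u\<bar> \<le> K * l1_dist P v u)"

definition taylor_near :: "'v set \<Rightarrow> ('v \<Rightarrow> real) \<Rightarrow> real \<Rightarrow> 'v pexpr \<Rightarrow> bool" where
  "taylor_near P \<theta> K e \<longleftrightarrow> lipschitz_near P \<theta> K (peval e) \<and>
     (\<forall>u v. l1_dist P u \<theta> \<le> 1 \<longrightarrow> l1_dist P v \<theta> \<le> 1 \<longrightarrow>
        \<bar>peval e v - peval e u - dir_deriv P e u (\<lambda>p. v p - u p)\<bar> \<le> K * (l1_dist P v u)\<^sup>2)"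

lemma lipschitz_nearD:
  assumes "lipschitz_near P \<theta> K f" "l1_dist P u \<theta> \<le> 1" "l1_dist P v \<theta> \<le> 1"
  shows "\<bar>f v\<bar> \<le> K" "\<bar>f v - f u\<bar> \<le> K * l1_dist P v u"
  using assms unfolding lipschitz_near_def by blast+

lemma taylor_nearD:
  assumes "taylor_near P \<theta> K e" "l1_dist P u \<theta> \<le> 1" "l1_dist P v \<theta> \<le> 1"
  shows "\<bar>peval e v\<bar> \<le> K" "\<bar>peval e v - peval e u\<bar> \<le> K * l1_dist P v u"
    "\<bar>peval e v - peval e u - dir_deriv P e u (\<lambda>p. v p - u p)\<bar> \<le> K * (l1_dist P v u)\<^sup>2"
  using assms unfolding taylor_near_def lipschitz_near_def by blast+

lemma lipschitz_near_mono:
  assumes "lipschitz_near P \<theta> K f" and "K \<le> K'"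
  shows "lipschitz_near P \<theta> K' f"
  unfolding lipschitz_near_def
proof (intro allI impI conjI)
  fix u v assume "l1_dist P u \<theta> \<le> 1" "l1_dist P v \<theta> \<le> 1"
  note B = lipschitz_nearD[OF assms(1) this]
  show "\<bar>f v\<bar> \<le> K'" using B(1) assms(2) by linarith
  have "K * l1_dist P v u \<le> K' * l1_dist P v u"
    using assms(2) l1_dist_nonneg by (rule mult_right_mono)
  then show "\<bar>f v - f u\<bar> \<le> K' * l1_dist P v u" using B(2) by linarith
qed

lemma taylor_near_mono:
  assumes "taylor_near P \<theta> K e" and "K \<le> K'"
  shows "taylor_near P \<theta> K' e"
  unfolding taylor_near_def
proof (intro allI impI conjI)
  show "lipschitz_near P \<theta> K' (peval e)"
    using assms lipschitz_near_mono unfolding taylor_near_def by blast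
  fix u v assume "l1_dist P u \<theta> \<le> 1" "l1_dist P v \<theta> \<le> 1"
  have "K * (l1_dist P v u)\<^sup>2 \<le> K' * (l1_dist P v u)\<^sup>2"
    using assms(2) by (rule mult_right_mono) simp
  then show "\<bar>peval e v - peval e u - dir_deriv P e u (\<lambda>p. v p - u p)\<bar> \<le> K' * (l1_dist P v u)\<^sup>2"
    using taylor_nearD(3)[OF assms(1) \<open>l1_dist P u \<theta> \<le> 1\<close> \<open>l1_dist P v \<theta> \<le> 1\<close>] by linarith
qed

lemma taylor_near_PConst: "taylor_near P \<theta> \<bar>c\<bar> (PConst c)"
  by (simp add: taylor_near_def lipschitz_near_def dir_deriv_def l1_dist_nonneg)

lemma taylor_near_PVar:
  assumes P: "finite P" and q: "q \<in> P"
  shows "taylor_near P \<theta> (\<bar>\<theta> q\<bar> + 1) (PVar q)"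
proof -
  have D: "dir_deriv P (PVar q) u w = w q" for u w
  proof -
    have "dir_deriv P (PVar q) u w = (\<Sum>p\<in>P. if p = q then w p else 0)"
      unfolding dir_deriv_def by (rule sum.cong) auto
    then show ?thesis using P q by simp
  qed
  have "\<bar>v q\<bar> \<le> \<bar>\<theta> q\<bar> + 1" if "l1_dist P v \<theta> \<le> 1" for v
    using abs_le_l1_dist[OF P q, of v \<theta>] that by linarith
  moreover have "\<bar>v q - u q\<bar> \<le> (\<bar>\<theta> q\<bar> + 1) * l1_dist P v u" for u v
    using abs_le_l1_dist[OF P q, of v u] l1_dist_nonneg[of P v u]
    by (smt (verit) mult_le_cancel_right1 mult_nonneg_nonneg)
  ultimately show ?thesis
    by (simp add: taylor_near_def lipschitz_near_def D)
qed

lemma taylor_near_PAdd: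
  assumes a: "taylor_near P \<theta> Ka a" and b: "taylor_near P \<theta> Kb b"
  shows "taylor_near P \<theta> (Ka + Kb) (PAdd a b)"
proof -
  have D: "dir_deriv P (PAdd a b) u w = dir_deriv P a u w + dir_deriv P b u w" for u w
    unfolding dir_deriv_def by (simp add: distrib_right sum.distrib)
  show ?thesis
    unfolding taylor_near_def lipschitz_near_def
  proof (intro allI impI conjI)
    fix u v assume u: "l1_dist P u \<theta> \<le> 1" and v: "l1_dist P v \<theta> \<le> 1"
    note A = taylor_nearD[OF a u v] and B = taylor_nearD[OF b u v]
    show "\<bar>peval (PAdd a b) v\<bar> \<le> Ka + Kb" using A B by simp
    show "\<bar>peval (PAdd a b) v - peval (PAdd a b) u\<bar> \<le> (Ka + Kb) * l1_dist P v u"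
      using A B by (simp add: distrib_right; linarith)
    show "\<bar>peval (PAdd a b) v - peval (PAdd a b) u - dir_deriv P (PAdd a b) u (\<lambda>p. v p - u p)\<bar>
        \<le> (Ka + Kb) * (l1_dist P v u)\<^sup>2"
      using A B by (simp add: D distrib_right; linarith)
  qed
qed

lemma product_increment_bounds:
  fixes x x' y y' dx dy d Kx Ky :: real
  assumes bounds: "\<bar>x\<bar> \<le> Kx" "\<bar>x'\<bar> \<le> Kx" "\<bar>y\<bar> \<le> Ky" "\<bar>y'\<bar> \<le> Ky"
    and lipschitz: "\<bar>x' - x\<bar> \<le> Kx * d" "\<bar>y' - y\<bar> \<le> Ky * d"
    and remainder: "\<bar>x' - x - dx\<bar> \<le> Kx * d\<^sup>2" "\<bar>y' - y - dy\<bar> \<le> Ky * d\<^sup>2"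
    and d: "d \<ge> 0"
  shows "\<bar>x' * y' - x * y\<bar> \<le> 3 * Kx * Ky * d"
    and "\<bar>x' * y' - x * y - (y * dx + x * dy)\<bar> \<le> 3 * Kx * Ky * d\<^sup>2"
proof -
  have Kx: "Kx \<ge> 0" and Ky: "Ky \<ge> 0" using bounds(1,3) by linarith+
  have "\<bar>x' * (y' - y)\<bar> \<le> Kx * (Ky * d)"
    unfolding abs_mult by (rule mult_mono'[OF bounds(2) lipschitz(2)]) simp_all
  moreover have "\<bar>y * (x' - x)\<bar> \<le> Ky * (Kx * d)"
    unfolding abs_mult by (rule mult_mono'[OF bounds(3) lipschitz(1)]) simp_all
  moreover have "x' * y' - x * y = x' * (y' - y) + y * (x' - x)" by (simp add: algebra_simps)
  moreover have "Kx * Ky * d \<ge> 0" using Kx Ky d by simp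
  ultimately show "\<bar>x' * y' - x * y\<bar> \<le> 3 * Kx * Ky * d" by (simp add: algebra_simps)
  have "\<bar>x * (y' - y - dy)\<bar> \<le> Kx * (Ky * d\<^sup>2)"
    unfolding abs_mult by (rule mult_mono'[OF bounds(1) remainder(2)]) simp_all
  moreover have "\<bar>y * (x' - x - dx)\<bar> \<le> Ky * (Kx * d\<^sup>2)"
    unfolding abs_mult by (rule mult_mono'[OF bounds(3) remainder(1)]) simp_all
  moreover have "\<bar>(x' - x) * (y' - y)\<bar> \<le> (Kx * d) * (Ky * d)"
    unfolding abs_mult by (rule mult_mono'[OF lipschitz]) simp_all
  moreover have "x' * y' - x * y - (y * dx + x * dy)
      = x * (y' - y - dy) + y * (x' - x - dx) + (x' - x) * (y' - y)"
    by (simp add: algebra_simps)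
  ultimately show "\<bar>x' * y' - x * y - (y * dx + x * dy)\<bar> \<le> 3 * Kx * Ky * d\<^sup>2"
    by (simp add: power2_eq_square algebra_simps)
qed

lemma taylor_near_PMult:
  assumes a: "taylor_near P \<theta> Ka a" and b: "taylor_near P \<theta> Kb b"
  shows "taylor_near P \<theta> (3 * Ka * Kb) (PMult a b)"
  unfolding taylor_near_def lipschitz_near_def
proof (intro allI impI conjI)
  fix u v assume u: "l1_dist P u \<theta> \<le> 1" and v: "l1_dist P v \<theta> \<le> 1"
  note A = taylor_nearD[OF a u v] and B = taylor_nearD[OF b u v]
  note products = product_increment_bounds[OF taylor_nearD(1)[OF a v u] A(1)
      taylor_nearD(1)[OF b v u] B(1) A(2) B(2) A(3) B(3) l1_dist_nonneg]
  have "\<bar>peval a v * peval b v\<bar> \<le> Ka * Kb"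
    unfolding abs_mult by (rule mult_mono'[OF A(1) B(1)]) simp_all
  moreover have "Ka * Kb \<le> 3 * Ka * Kb" using A(1) B(1) by simp
  ultimately show "\<bar>peval (PMult a b) v\<bar> \<le> 3 * Ka * Kb" by simp
  show "\<bar>peval (PMult a b) v - peval (PMult a b) u\<bar> \<le> 3 * Ka * Kb * l1_dist P v u"
    using products(1) by simp
  have "dir_deriv P (PMult a b) u w = peval b u * dir_deriv P a u w + peval a u * dir_deriv P b u w"
    for w
    unfolding dir_deriv_def by (simp add: algebra_simps sum.distrib sum_distrib_left)
  then show "\<bar>peval (PMult a b) v - peval (PMult a b) u - dir_deriv P (PMult a b) u (\<lambda>p. v p - u p)\<bar>
      \<le> 3 * Ka * Kb * (l1_dist P v u)\<^sup>2"
    using products(2) by simp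
qed

lemma taylor_near_exists:
  assumes "finite P" and "pvars e \<subseteq> P"
  shows "\<exists>K. taylor_near P \<theta> K e"
  using assms(2)
proof (induction e)
  case (PConst c)
  show ?case using taylor_near_PConst by blast
next
  case (PVar q)
  then show ?case using taylor_near_PVar[OF assms(1)] by auto
next
  case (PAdd a b)
  then obtain Ka Kb where "taylor_near P \<theta> Ka a" "taylor_near P \<theta> Kb b" by auto
  then show ?case by (blast intro: taylor_near_PAdd)
next
  case (PMult a b)
  then obtain Ka Kb where "taylor_near P \<theta> Ka a" "taylor_near P \<theta> Kb b" by auto
  then show ?case by (blast intro: taylor_near_PMult)
qed

lemma lipschitz_near_poly_fun:
  assumes "finite P" and "poly_fun P f"
  shows "\<exists>K. lipschitz_near P \<theta> K f"
proof -
  obtain e where "pvars e \<subseteq> P" "f = peval e" using assms(2) poly_fun_iff_peval by blast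
  then show ?thesis using taylor_near_exists[OF assms(1)] unfolding taylor_near_def by blast
qed

lemma finite_uniform_bound:
  fixes B :: "'s \<Rightarrow> real \<Rightarrow> bool"
  assumes "finite S" and "\<And>s. s \<in> S \<Longrightarrow> \<exists>K. B s K"
    and "\<And>s K K'. s \<in> S \<Longrightarrow> B s K \<Longrightarrow> K \<le> K' \<Longrightarrow> B s K'"
  shows "\<exists>K\<ge>c. \<forall>s\<in>S. B s K"
  using assms
proof (induction S rule: finite_induct)
  case empty
  show ?case by (intro exI[of _ c]) auto
next
  case (insert s S)
  have "\<exists>K\<ge>c. \<forall>s\<in>S. B s K"
    by (rule insert.IH) (use insert.prems in auto)
  then obtain K where K: "K \<ge> c" "\<forall>s\<in>S. B s K" by blast
  obtain K' where K': "B s K'" using insert.prems(1) by blast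
  show ?case
  proof (intro exI[of _ "max K K'"] conjI ballI)
    show "c \<le> max K K'" using K(1) by simp
    fix s' assume "s' \<in> insert s S"
    then show "B s' (max K K')"
      using K(2) K' insert.prems(2) by (metis insert_iff max.cobounded1 max.cobounded2)
  qed
qed

lemma taylor_near_uniform:
  assumes "finite P" and "finite S" and "\<forall>e\<in>S. pvars e \<subseteq> P"
  shows "\<exists>K\<ge>c. \<forall>e\<in>S. taylor_near P \<theta> K e"
proof (rule finite_uniform_bound[OF assms(2)])
  show "\<exists>K. taylor_near P \<theta> K e" if "e \<in> S" for e
    using taylor_near_exists[OF assms(1)] assms(3) that by blast
qed (rule taylor_near_mono)

lemma lipschitz_near_uniform:
  assumes "finite P" and "finite F" and "\<forall>f\<in>F. poly_fun P f"
  shows "\<exists>K\<ge>c. \<forall>f\<in>F. lipschitz_near P \<theta> K f"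
proof (rule finite_uniform_bound[OF assms(2)])
  show "\<exists>K. lipschitz_near P \<theta> K f" if "f \<in> F" for f
    using lipschitz_near_poly_fun[OF assms(1)] assms(3) that by blast
qed (rule lipschitz_near_mono)

section \<open>Contractions in the \<open>\<ell>\<^sup>1\<close> metric and a constancy criterion\<close>

lemma eq_if_increments_quadratic:
  fixes g :: "real \<Rightarrow> real"
  assumes bound: "\<And>s t. s \<in> {a<..<b} \<Longrightarrow> t \<in> {a<..<b} \<Longrightarrow> \<bar>g s - g t\<bar> \<le> C * (s - t)\<^sup>2"
    and s: "s \<in> {a<..<b}" and t: "t \<in> {a<..<b}"
  shows "g s = g t"
proof (rule DERIV_isconst3[OF _ s t])
  show "a < b" using s by simp
  fix x assume x: "x \<in> {a<..<b}"
  have "eventually (\<lambda>y. y \<in> {a<..<b}) (at x)"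
    using x by (intro eventually_at_in_open') auto
  then have "eventually (\<lambda>y. dist ((g y - g x) / (y - x)) 0 \<le> dist (\<bar>C\<bar> * \<bar>y - x\<bar>) 0) (at x)"
  proof (rule eventually_mono)
    fix y assume "y \<in> {a<..<b}"
    have "C * (y - x)\<^sup>2 \<le> \<bar>C\<bar> * (y - x)\<^sup>2" by (simp add: mult_right_mono)
    also have "\<dots> = \<bar>C\<bar> * \<bar>y - x\<bar> * \<bar>y - x\<bar>" by (simp add: power2_eq_square abs_mult_self_eq)
    finally have "\<bar>g y - g x\<bar> \<le> \<bar>C\<bar> * \<bar>y - x\<bar> * \<bar>y - x\<bar>"
      using bound[OF \<open>y \<in> {a<..<b}\<close> x] by linarith
    then show "dist ((g y - g x) / (y - x)) 0 \<le> dist (\<bar>C\<bar> * \<bar>y - x\<bar>) 0"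
      by (cases "y = x") (simp_all add: abs_divide pos_divide_le_eq)
  qed
  moreover have "((\<lambda>y. \<bar>C\<bar> * \<bar>y - x\<bar>) \<longlongrightarrow> 0) (at x)"
    by (auto intro!: tendsto_eq_intros)
  ultimately show "DERIV g x :> 0"
    unfolding has_field_derivative_iff by (blast intro: metric_tendsto_imp_tendsto)
qed

lemma convergent_if_geometric_increments:
  fixes x :: "nat \<Rightarrow> real"
  assumes "\<And>k. \<bar>x (Suc k) - x k\<bar> \<le> C * (1/2) ^ k"
  shows "convergent x"
proof -
  have "summable (\<lambda>k. C * (1/2::real) ^ k)"
    by (intro summable_mult summable_geometric) simp
  then have "summable (\<lambda>k. x (Suc k) - x k)"
    by (rule summable_comparison_test[rotated]) (use assms in auto)
  then have "convergent (\<lambda>n. \<Sum>k<n. x (Suc k) - x k)"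
    using summable_LIMSEQ convergent_def by blast
  moreover have "(\<Sum>k<n. x (Suc k) - x k) = x n - x 0" for n
    by (rule sum_lessThan_telescope)
  ultimately have "convergent (\<lambda>n. (x n - x 0) + x 0)"
    by (intro convergent_add convergent_const) simp
  then show ?thesis by simp
qed

lemma l1_contraction_iterates:
  assumes start: "l1_dist S (T c) c \<le> \<rho> / 2"
    and contr: "\<And>y y'. l1_dist S y c \<le> \<rho> \<Longrightarrow> l1_dist S y' c \<le> \<rho> \<Longrightarrow>
        l1_dist S (T y) (T y') \<le> l1_dist S y y' / 2"
  shows "l1_dist S ((T ^^ k) c) c \<le> \<rho> * (1 - (1/2) ^ k) \<and>
    l1_dist S ((T ^^ Suc k) c) ((T ^^ k) c) \<le> \<rho> / 2 * (1/2) ^ k"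
proof (induction k)
  case 0
  then show ?case using start by (simp add: l1_dist_self)
next
  case (Suc k)
  have \<rho>: "\<rho> \<ge> 0" using start l1_dist_nonneg[of S "T c" c] by linarith
  have le: "\<rho> * (1 - (1/2) ^ m) \<le> \<rho>" for m using \<rho> by (intro mult_left_le) auto
  have "l1_dist S ((T ^^ Suc k) c) c
      \<le> l1_dist S ((T ^^ Suc k) c) ((T ^^ k) c) + l1_dist S ((T ^^ k) c) c"
    by (rule l1_dist_triangle)
  also have "\<dots> \<le> \<rho> / 2 * (1/2) ^ k + \<rho> * (1 - (1/2) ^ k)"
    using Suc.IH by linarith
  also have "\<dots> = \<rho> * (1 - (1/2) ^ Suc k)" by (simp add: algebra_simps)
  finally have step: "l1_dist S ((T ^^ Suc k) c) c \<le> \<rho> * (1 - (1/2) ^ Suc k)" .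
  have "l1_dist S ((T ^^ Suc (Suc k)) c) ((T ^^ Suc k) c)
      = l1_dist S (T ((T ^^ Suc k) c)) (T ((T ^^ k) c))"
    by simp
  also have "\<dots> \<le> l1_dist S ((T ^^ Suc k) c) ((T ^^ k) c) / 2"
    using step Suc.IH le[of "Suc k"] le[of k] by (intro contr) linarith+
  also have "\<dots> \<le> \<rho> / 2 * (1/2) ^ Suc k" using Suc.IH by simp
  finally show ?case using step by simp
qed

lemma l1_limit_if_geometric_increments:
  assumes S: "finite S" and step: "\<And>k. l1_dist S (x (Suc k)) (x k) \<le> C * (1/2) ^ k"
  obtains z where "\<And>b. b \<in> S \<Longrightarrow> (\<lambda>k. x k b) \<longlonglongrightarrow> z b" and "(\<lambda>k. l1_dist S (x k) z) \<longlonglongrightarrow> 0"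
proof -
  define z where "z b = lim (\<lambda>k. x k b)" for b
  have "convergent (\<lambda>k. x k b)" if "b \<in> S" for b
  proof (rule convergent_if_geometric_increments)
    show "\<bar>x (Suc k) b - x k b\<bar> \<le> C * (1/2) ^ k" for k
      using abs_le_l1_dist[OF S that, of "x (Suc k)" "x k"] step[of k] by linarith
  qed
  then have conv: "(\<lambda>k. x k b) \<longlonglongrightarrow> z b" if "b \<in> S" for b
    using that unfolding z_def by (simp add: convergent_LIMSEQ_iff)
  have "(\<lambda>k. \<Sum>b\<in>S. \<bar>x k b - z b\<bar>) \<longlonglongrightarrow> (\<Sum>b\<in>S. \<bar>z b - z b\<bar>)"
    by (intro tendsto_sum tendsto_rabs tendsto_diff conv tendsto_const)
  then have "(\<lambda>k. l1_dist S (x k) z) \<longlonglongrightarrow> 0" unfolding l1_dist_def by simp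
  with conv show ?thesis using that by blast
qed

lemma l1_contraction_fixpoint:
  fixes T :: "('a \<Rightarrow> real) \<Rightarrow> 'a \<Rightarrow> real"
  assumes S: "finite S" and start: "l1_dist S (T c) c \<le> \<rho> / 2"
    and contr: "\<And>y y'. l1_dist S y c \<le> \<rho> \<Longrightarrow> l1_dist S y' c \<le> \<rho> \<Longrightarrow>
        l1_dist S (T y) (T y') \<le> l1_dist S y y' / 2"
  shows "\<exists>y. l1_dist S y c \<le> \<rho> \<and> (\<forall>b\<in>S. T y b = y b)"
proof -
  define x where "x k = (T ^^ k) c" for k
  note iter = l1_contraction_iterates[OF start contr, folded x_def]
  have in_ball: "l1_dist S (x k) c \<le> \<rho>" for k
  proof -
    have "\<rho> \<ge> 0" using start l1_dist_nonneg[of S "T c" c] by linarith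
    then have "\<rho> * (1 - (1/2) ^ k) \<le> \<rho>" by (intro mult_left_le) auto
    then show ?thesis using iter[of k] by linarith
  qed
  obtain z where conv: "\<And>b. b \<in> S \<Longrightarrow> (\<lambda>k. x k b) \<longlonglongrightarrow> z b"
    and to_z: "(\<lambda>k. l1_dist S (x k) z) \<longlonglongrightarrow> 0"
    using l1_limit_if_geometric_increments[OF S, of x "\<rho> / 2"] iter by blast
  have z_in_ball: "l1_dist S z c \<le> \<rho>"
  proof -
    have "(\<lambda>k. l1_dist S (x k) c) \<longlonglongrightarrow> l1_dist S z c"
      unfolding l1_dist_def by (intro tendsto_sum tendsto_rabs tendsto_diff conv tendsto_const)
    then show ?thesis by (rule LIMSEQ_le_const2) (use in_ball in auto)
  qed
  have "l1_dist S (T z) z \<le> 0"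
  proof (rule LIMSEQ_le_const)
    show "(\<lambda>k. l1_dist S (x k) z / 2 + l1_dist S (x (Suc k)) z) \<longlonglongrightarrow> 0"
      using tendsto_add[OF tendsto_divide[OF to_z tendsto_const[of 2]] LIMSEQ_Suc[OF to_z]] by simp
    have "l1_dist S (T z) z \<le> l1_dist S (x k) z / 2 + l1_dist S (x (Suc k)) z" for k
    proof -
      have "l1_dist S (T z) (x (Suc k)) \<le> l1_dist S (x k) z / 2"
        using contr[OF z_in_ball in_ball[of k]] by (simp add: x_def l1_dist_commute)
      then show ?thesis using l1_dist_triangle[of S "T z" z "x (Suc k)"] by linarith
    qed
    then show "\<exists>N. \<forall>k\<ge>N. l1_dist S (T z) z \<le> l1_dist S (x k) z / 2 + l1_dist S (x (Suc k)) z"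
      by blast
  qed
  then have "T z b = z b" if "b \<in> S" for b
    using abs_le_l1_dist[OF S that, of "T z" z] by simp
  then show ?thesis using z_in_ball by blast
qed

section \<open>Infinite fibres through a point of maximal Jacobian rank\<close>

definition jacobian :: "('i \<Rightarrow> 'v pexpr) \<Rightarrow> 'i list \<Rightarrow> 'v list \<Rightarrow> ('v \<Rightarrow> real) \<Rightarrow> real mat" where
  "jacobian e rs cs x =
     mat (length rs) (length cs) (\<lambda>(a, b). peval (pdiff (cs ! b) (e (rs ! a))) x)"

lemma mat_mult_smult_one_apply:
  fixes A B :: "'a::comm_ring_1 mat"
  assumes "A \<in> carrier_mat n n" "B \<in> carrier_mat n n" "A * B = d \<cdot>\<^sub>m 1\<^sub>m n" "i < n"
  shows "(\<Sum>k<n. A $$ (i, k) * (\<Sum>q<n. B $$ (k, q) * z q)) = d * z i"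
proof -
  have AB: "(\<Sum>k<n. A $$ (i, k) * B $$ (k, q)) = (if i = q then d else 0)" if "q < n" for q
  proof -
    have "(\<Sum>k<n. A $$ (i, k) * B $$ (k, q)) = (A * B) $$ (i, q)"
      using assms(1,2,4) that by (simp add: scalar_prod_def atLeast0LessThan)
    also have "\<dots> = (d \<cdot>\<^sub>m 1\<^sub>m n) $$ (i, q)" by (simp only: assms(3))
    also have "\<dots> = (if i = q then d else 0)" using assms(4) that by simp
    finally show ?thesis .
  qed
  have "(\<Sum>k<n. A $$ (i, k) * (\<Sum>q<n. B $$ (k, q) * z q))
      = (\<Sum>q<n. (\<Sum>k<n. A $$ (i, k) * B $$ (k, q)) * z q)"
    by (simp add: sum_distrib_left sum_distrib_right mult.assoc) (rule sum.swap)
  also have "\<dots> = (\<Sum>q<n. if i = q then d * z q else 0)"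
    using assms(4) by (intro sum.cong) (auto simp: AB)
  also have "\<dots> = d * z i" using assms(4) by simp
  finally show ?thesis .
qed

lemma poly_fun_jacobian_entry:
  assumes "\<forall>i\<in>set rs. pvars (e i) \<subseteq> P" and "a < length rs" "b < length cs"
  shows "poly_fun P (\<lambda>x. jacobian e rs cs x $$ (a, b))"
proof -
  have "pvars (pdiff (cs ! b) (e (rs ! a))) \<subseteq> pvars (e (rs ! a))" by (rule pvars_pdiff)
  also have "\<dots> \<subseteq> P" using assms(1) nth_mem[OF assms(2)] by blast
  finally have "poly_fun P (peval (pdiff (cs ! b) (e (rs ! a))))" by (rule poly_fun_peval)
  moreover have "(\<lambda>x. jacobian e rs cs x $$ (a, b)) = peval (pdiff (cs ! b) (e (rs ! a)))"
    using assms(2,3) by (simp add: jacobian_def fun_eq_iff)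
  ultimately show ?thesis by simp
qed

lemma poly_fun_det_jacobian:
  assumes "\<forall>i\<in>set rs. pvars (e i) \<subseteq> P" and "length cs = length rs"
  shows "poly_fun P (\<lambda>x. det (jacobian e rs cs x))"
proof (rule fun_subring_det[OF fun_subring_poly_fun])
  show "jacobian e rs cs x \<in> carrier_mat (length rs) (length rs)" for x
    using assms(2) by (simp add: jacobian_def)
  show "poly_fun P (\<lambda>x. jacobian e rs cs x $$ (a, b))" if "a < length rs" "b < length rs" for a b
    using poly_fun_jacobian_entry[OF assms(1)] that assms(2) by simp
qed

lemma poly_fun_adj_jacobian:
  assumes "\<forall>i\<in>set rs. pvars (e i) \<subseteq> P" and "length cs = length rs"
    and "a < length rs" "b < length rs"
  shows "poly_fun P (\<lambda>x. adj_mat (jacobian e rs cs x) $$ (a, b))"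
proof (rule fun_subring_adj_mat_entry[OF fun_subring_poly_fun])
  show "jacobian e rs cs x \<in> carrier_mat (length rs) (length rs)" for x
    using assms(2) by (simp add: jacobian_def)
  show "poly_fun P (\<lambda>x. jacobian e rs cs x $$ (a, b))" if "a < length rs" "b < length rs" for a b
    using poly_fun_jacobian_entry[OF assms(1)] that assms(2) by simp
qed (use assms in simp_all)

lemma det_jacobian_Nil: "det (jacobian e [] [] x) = 1"
proof -
  have "jacobian e [] [] x = 1\<^sub>m 0" by (rule eq_matI) (auto simp: jacobian_def)
  then show ?thesis by simp
qed

locale maximal_minor =
  fixes P :: "param set" and I :: "'i set" and e :: "'i \<Rightarrow> param pexpr"
    and rs :: "'i list" and cs :: "param list" and j :: param and \<theta> :: "param \<Rightarrow> real"
  assumes finite_P: "finite P" and finite_I: "finite I"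
    and pvars_e: "\<And>i. i \<in> I \<Longrightarrow> pvars (e i) \<subseteq> P"
    and rows: "distinct rs" "set rs \<subseteq> I"
    and cols: "distinct cs" "set cs \<subseteq> P" "length cs = length rs"
    and j: "j \<in> P" "j \<notin> set cs"
    and \<theta>: "\<theta> \<in> P \<rightarrow>\<^sub>E UNIV"
    and minor_nonzero: "det (jacobian e rs cs \<theta>) \<noteq> 0"
    and bordered_minor_zero: "\<And>i x. i \<in> I \<Longrightarrow> i \<notin> set rs \<Longrightarrow> x \<in> P \<rightarrow>\<^sub>E UNIV \<Longrightarrow>
        det (jacobian e (rs @ [i]) (cs @ [j]) x) = 0"
begin

abbreviation "r \<equiv> length rs"

definition "jac0 = jacobian e rs cs \<theta>"
definition "det0 = det jac0"
definition "adj0 = adj_mat jac0"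

definition shift :: "(nat \<Rightarrow> real) \<Rightarrow> real \<Rightarrow> param \<Rightarrow> real" where
  "shift y t p = (\<Sum>b<r. if cs ! b = p then y b else 0) + (if p = j then t else 0)"

definition shifted :: "(nat \<Rightarrow> real) \<Rightarrow> real \<Rightarrow> param \<Rightarrow> real" where
  "shifted y t = restrict (\<lambda>p. \<theta> p + shift y t p) P"

definition residual :: "nat \<Rightarrow> (nat \<Rightarrow> real) \<Rightarrow> real \<Rightarrow> real" where
  "residual a y t = peval (e (rs ! a)) (shifted y t) - peval (e (rs ! a)) \<theta>"

text \<open>A Newton step for the equations \<open>residual a y t = 0\<close>, with the Jacobian frozen at \<open>\<theta>\<close>.\<close>
definition newton :: "real \<Rightarrow> (nat \<Rightarrow> real) \<Rightarrow> nat \<Rightarrow> real" where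
  "newton t y b = y b - (\<Sum>a<r. adj0 $$ (b, a) * residual a y t) / det0"

definition inv_norm :: real where
  "inv_norm = (\<Sum>b<r. \<Sum>a<r. \<bar>adj0 $$ (b, a)\<bar>) / \<bar>det0\<bar>"

lemma det0_nonzero: "det0 \<noteq> 0"
  using minor_nonzero by (simp add: det0_def jac0_def)

lemma inv_norm_nonneg: "inv_norm \<ge> 0"
  unfolding inv_norm_def by (auto intro!: sum_nonneg)

lemma rows_nth: "a < r \<Longrightarrow> rs ! a \<in> I"
  using rows nth_mem by blast

lemma cols_nth: "b < r \<Longrightarrow> cs ! b \<in> P"
  using cols nth_mem by (metis subsetD)

lemma jac0_carrier: "jac0 \<in> carrier_mat r r"
  by (simp add: jac0_def jacobian_def cols(3))

lemma jac0_entry: "a < r \<Longrightarrow> c < r \<Longrightarrow> jac0 $$ (a, c) = peval (pdiff (cs ! c) (e (rs ! a))) \<theta>"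
  by (simp add: jac0_def jacobian_def cols(3))

lemma poly_fun_pdiff_e: "i \<in> I \<Longrightarrow> poly_fun P (peval (pdiff p (e i)))"
  using pvars_pdiff pvars_e poly_fun_peval by (metis subset_trans)

definition jacobian_family :: "((param \<Rightarrow> real) \<Rightarrow> real) set" where
  "jacobian_family = (\<lambda>(i, p). peval (pdiff p (e i))) ` (I \<times> P) \<union> {\<lambda>x. det (jacobian e rs cs x)}
      \<union> (\<lambda>(i, k) x. adj_mat (jacobian e (rs @ [i]) (cs @ [j]) x) $$ (r, k)) ` (I \<times> {..<r})"

lemma finite_jacobian_family: "finite jacobian_family"
  unfolding jacobian_family_def using finite_I finite_P by simp

lemma jacobian_family_members:
  "i \<in> I \<Longrightarrow> p \<in> P \<Longrightarrow> peval (pdiff p (e i)) \<in> jacobian_family"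
  "(\<lambda>x. det (jacobian e rs cs x)) \<in> jacobian_family"
  "i \<in> I \<Longrightarrow> k < r \<Longrightarrow> (\<lambda>x. adj_mat (jacobian e (rs @ [i]) (cs @ [j]) x) $$ (r, k)) \<in> jacobian_family"
proof -
  show "i \<in> I \<Longrightarrow> p \<in> P \<Longrightarrow> peval (pdiff p (e i)) \<in> jacobian_family"
    unfolding jacobian_family_def by (intro UnI1 rev_image_eqI[of "(i, p)"]) auto
  show "(\<lambda>x. det (jacobian e rs cs x)) \<in> jacobian_family"
    unfolding jacobian_family_def by blast
  show "i \<in> I \<Longrightarrow> k < r \<Longrightarrow>
      (\<lambda>x. adj_mat (jacobian e (rs @ [i]) (cs @ [j]) x) $$ (r, k)) \<in> jacobian_family"
    unfolding jacobian_family_def by (intro UnI2 rev_image_eqI[of "(i, k)"]) auto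
qed

lemma poly_fun_jacobian_family: "\<forall>f\<in>jacobian_family. poly_fun P f"
proof
  fix f assume "f \<in> jacobian_family"
  then consider (entry) i p where "i \<in> I" "f = peval (pdiff p (e i))"
    | (minor) "f = (\<lambda>x. det (jacobian e rs cs x))"
    | (adj) i k where "i \<in> I" "k < r" "f = (\<lambda>x. adj_mat (jacobian e (rs @ [i]) (cs @ [j]) x) $$ (r, k))"
    unfolding jacobian_family_def by auto
  then show "poly_fun P f"
  proof cases
    case entry
    then show ?thesis using poly_fun_pdiff_e by simp
  next
    case minor
    have "\<forall>i\<in>set rs. pvars (e i) \<subseteq> P" using rows(2) pvars_e by auto
    then show ?thesis unfolding minor by (rule poly_fun_det_jacobian) (rule cols(3))
  next
    case adj
    have "\<forall>i'\<in>set (rs @ [i]). pvars (e i') \<subseteq> P" using adj(1) rows(2) pvars_e by auto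
    then show ?thesis unfolding adj(3) by (rule poly_fun_adj_jacobian) (use adj(2) cols(3) in simp_all)
  qed
qed

lemma bordered_corner_adj:
  "adj_mat (jacobian e (rs @ [i]) (cs @ [j]) x) $$ (r, r) = det (jacobian e rs cs x)"
proof -
  have "mat_delete (jacobian e (rs @ [i]) (cs @ [j]) x) r r = jacobian e rs cs x"
    by (rule eq_matI) (auto simp: mat_delete_def jacobian_def nth_append cols(3))
  then show ?thesis by (simp add: adj_mat_def cofactor_def jacobian_def cols(3))
qed

lemma sum_shift:
  assumes F0: "\<And>p. F p 0 = 0"
  shows "(\<Sum>p\<in>P. F p (shift z s p)) = (\<Sum>b<r. F (cs ! b) (z b)) + F j s"
proof -
  have shift_cols: "shift z s (cs ! b) = z b" if "b < r" for b
  proof -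
    have "(\<Sum>b'<r. if cs ! b' = cs ! b then z b' else 0) = (\<Sum>b'<r. if b' = b then z b' else 0)"
      by (rule sum.cong) (use that cols in \<open>auto simp: nth_eq_iff_index_eq\<close>)
    then show ?thesis
      unfolding shift_def using that j(2) nth_mem[of b cs] cols(3) by auto
  qed
  have "(\<Sum>b<r. if cs ! b = j then z b else 0) = 0"
    by (rule sum.neutral) (use j(2) cols(3) nth_mem in force)
  then have shift_j: "shift z s j = s" unfolding shift_def by simp
  have shift_other: "shift z s p = 0" if "p \<notin> set cs" "p \<noteq> j" for p
    unfolding shift_def using that cols(3) by (auto intro!: sum.neutral dest: nth_mem)
  have "(\<Sum>p\<in>P. F p (shift z s p)) = (\<Sum>p\<in>insert j (set cs). F p (shift z s p))"
    by (rule sum.mono_neutral_right) (use finite_P j cols(2) in \<open>auto simp: shift_other F0\<close>)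
  also have "\<dots> = F j s + (\<Sum>p\<in>set cs. F p (shift z s p))"
    using j(2) by (simp add: shift_j)
  also have "(\<Sum>p\<in>set cs. F p (shift z s p)) = (\<Sum>b<r. F (cs ! b) (shift z s (cs ! b)))"
  proof -
    have "set cs = (\<lambda>b. cs ! b) ` {..<r}" using cols(3) by (auto simp: set_conv_nth)
    moreover have "inj_on (\<lambda>b. cs ! b) {..<r}"
      using cols(1,3) by (auto simp: inj_on_def nth_eq_iff_index_eq)
    ultimately show ?thesis by (simp add: sum.reindex)
  qed
  also have "\<dots> = (\<Sum>b<r. F (cs ! b) (z b))" by (rule sum.cong) (auto simp: shift_cols)
  finally show ?thesis by (simp add: add.commute)
qed

lemma shifted_diff: "p \<in> P \<Longrightarrow> shifted y t p - shifted y' t' p = shift (\<lambda>b. y b - y' b) (t - t') p"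
  unfolding shifted_def shift_def by (auto simp: sum_subtractf[symmetric] intro!: sum.cong)

lemma l1_dist_shifted: "l1_dist P (shifted y t) (shifted y' t') = l1_dist {..<r} y y' + \<bar>t - t'\<bar>"
proof -
  have "l1_dist P (shifted y t) (shifted y' t') = (\<Sum>p\<in>P. \<bar>shift (\<lambda>b. y b - y' b) (t - t') p\<bar>)"
    unfolding l1_dist_def by (rule sum.cong) (auto simp: shifted_diff)
  also have "\<dots> = l1_dist {..<r} y y' + \<bar>t - t'\<bar>"
    by (subst sum_shift) (auto simp: l1_dist_def)
  finally show ?thesis .
qed

lemma shifted_zero: "shifted (\<lambda>_. 0) 0 = \<theta>"
  using \<theta> by (auto simp: shifted_def shift_def PiE_def extensional_def fun_eq_iff)

lemma l1_dist_shifted_center: "l1_dist P (shifted y t) \<theta> = l1_dist {..<r} y (\<lambda>_. 0) + \<bar>t\<bar>"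
  using l1_dist_shifted[of y t "\<lambda>_. 0" 0] by (simp add: shifted_zero)

lemma shifted_PiE: "shifted y t \<in> P \<rightarrow>\<^sub>E UNIV"
  by (simp add: shifted_def)

lemma shifted_j: "shifted y t j = \<theta> j + t"
proof -
  have "(\<Sum>b<r. if cs ! b = j then y b else 0) = 0"
    by (rule sum.neutral) (use j(2) cols(3) nth_mem in force)
  then show ?thesis unfolding shifted_def shift_def using j(1) by simp
qed

lemma shifted_cong: "(\<And>b. b < r \<Longrightarrow> y b = y' b) \<Longrightarrow> shifted y t = shifted y' t"
  unfolding shifted_def shift_def by (auto simp: fun_eq_iff intro!: sum.cong)

lemma dir_deriv_shifted:
  "dir_deriv P ex u (\<lambda>p. shifted y t p - shifted y' t' p)
    = (\<Sum>b<r. peval (pdiff (cs ! b) ex) u * (y b - y' b)) + peval (pdiff j ex) u * (t - t')"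
proof -
  have "dir_deriv P ex u (\<lambda>p. shifted y t p - shifted y' t' p)
      = (\<Sum>p\<in>P. peval (pdiff p ex) u * shift (\<lambda>b. y b - y' b) (t - t') p)"
    unfolding dir_deriv_def by (rule sum.cong) (auto simp: shifted_diff)
  also have "\<dots> = (\<Sum>b<r. peval (pdiff (cs ! b) ex) u * (y b - y' b)) + peval (pdiff j ex) u * (t - t')"
    by (subst sum_shift) auto
  finally show ?thesis .
qed

lemma adj0_jac0: "b < r \<Longrightarrow> (\<Sum>a<r. adj0 $$ (b, a) * (\<Sum>c<r. jac0 $$ (a, c) * z c)) = det0 * z b"
  using adj_mat[OF jac0_carrier] jac0_carrier
  by (intro mat_mult_smult_one_apply) (auto simp: adj0_def det0_def)

lemma jac0_adj0: "a < r \<Longrightarrow> (\<Sum>b<r. jac0 $$ (a, b) * (\<Sum>c<r. adj0 $$ (b, c) * z c)) = det0 * z a"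
  using adj_mat[OF jac0_carrier] jac0_carrier
  by (intro mat_mult_smult_one_apply) (auto simp: adj0_def det0_def)

lemma sum_adj0_le:
  assumes "\<And>a. a < r \<Longrightarrow> \<bar>w a\<bar> \<le> B"
  shows "(\<Sum>b<r. \<bar>(\<Sum>a<r. adj0 $$ (b, a) * w a) / det0\<bar>) \<le> inv_norm * B"
proof -
  have "(\<Sum>b<r. \<bar>(\<Sum>a<r. adj0 $$ (b, a) * w a) / det0\<bar>) = (\<Sum>b<r. \<bar>\<Sum>a<r. adj0 $$ (b, a) * w a\<bar>) / \<bar>det0\<bar>"
    unfolding abs_divide by (rule sum_divide_distrib[symmetric])
  also have "\<dots> \<le> (\<Sum>b<r. \<Sum>a<r. \<bar>adj0 $$ (b, a)\<bar> * B) / \<bar>det0\<bar>"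
  proof (rule divide_right_mono, rule sum_mono)
    fix b
    have "\<bar>\<Sum>a<r. adj0 $$ (b, a) * w a\<bar> \<le> (\<Sum>a<r. \<bar>adj0 $$ (b, a) * w a\<bar>)" by (rule sum_abs)
    also have "\<dots> \<le> (\<Sum>a<r. \<bar>adj0 $$ (b, a)\<bar> * B)"
      by (rule sum_mono) (auto simp: abs_mult intro!: mult_left_mono assms)
    finally show "\<bar>\<Sum>a<r. adj0 $$ (b, a) * w a\<bar> \<le> (\<Sum>a<r. \<bar>adj0 $$ (b, a)\<bar> * B)" .
  qed simp
  also have "\<dots> = inv_norm * B" unfolding inv_norm_def by (simp add: sum_distrib_right)
  finally show ?thesis .
qed

lemma newton_diff:
  assumes b: "b < r"
  shows "newton t y b - newton t' y' b = (\<Sum>a<r. adj0 $$ (b, a) *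
      ((\<Sum>c<r. jac0 $$ (a, c) * (y c - y' c)) - (residual a y t - residual a y' t'))) / det0"
proof -
  define S1 where "S1 = (\<Sum>a<r. adj0 $$ (b, a) * (\<Sum>c<r. jac0 $$ (a, c) * (y c - y' c)))"
  define S2 where "S2 = (\<Sum>a<r. adj0 $$ (b, a) * residual a y t)"
  define S3 where "S3 = (\<Sum>a<r. adj0 $$ (b, a) * residual a y' t')"
  have eq1: "y b - y' b = S1 / det0"
    using adj0_jac0[OF b, of "\<lambda>c. y c - y' c"] det0_nonzero unfolding S1_def by simp
  have eq2: "(\<Sum>a<r. adj0 $$ (b, a) *
      ((\<Sum>c<r. jac0 $$ (a, c) * (y c - y' c)) - (residual a y t - residual a y' t'))) = S1 - (S2 - S3)"
    unfolding S1_def S2_def S3_def by (simp add: right_diff_distrib sum_subtractf)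
  have eq3: "(S1 - (S2 - S3)) / det0 = S1 / det0 - S2 / det0 + S3 / det0"
    by (simp add: diff_divide_distrib)
  show ?thesis
    unfolding newton_def S2_def[symmetric] S3_def[symmetric] eq2 eq3 using eq1 by linarith
qed

lemma residual_zero_if_fixed:
  assumes fixed: "\<forall>b<r. newton t y b = y b" and a: "a < r"
  shows "residual a y t = 0"
proof -
  have zero: "(\<Sum>a'<r. adj0 $$ (b, a') * residual a' y t) = 0" if "b < r" for b
    using fixed that det0_nonzero unfolding newton_def by auto
  have "det0 * residual a y t = (\<Sum>b<r. jac0 $$ (a, b) * (\<Sum>a'<r. adj0 $$ (b, a') * residual a' y t))"
    using jac0_adj0[OF a] by simp
  also have "\<dots> = 0" by (rule sum.neutral) (simp add: zero)
  finally show ?thesis using det0_nonzero by simp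
qed

end

lemma contraction_radii_exist:
  fixes K \<alpha> D :: real
  assumes K: "K \<ge> 1" and \<alpha>: "\<alpha> \<ge> 0" and D: "D \<noteq> 0"
  shows "\<exists>\<rho> \<tau>. 0 < \<tau> \<and> \<tau> \<le> \<rho> \<and> \<rho> + \<tau> \<le> 1 \<and> \<alpha> * K * (3 * \<rho> + \<tau>) \<le> 1 / 2 \<and>
    \<alpha> * K * \<tau> \<le> \<rho> / 2 \<and> K * (\<rho> + \<tau>) \<le> \<bar>D\<bar> / 8"
proof -
  define M where "M = \<alpha> * K + 1 + 2 * K / \<bar>D\<bar>"
  define \<rho> where "\<rho> = 1 / (8 * M)"
  define \<tau> where "\<tau> = \<rho> / (2 * M)"
  have M: "M \<ge> 1" "\<alpha> * K \<le> M" "2 * K / \<bar>D\<bar> \<le> M"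
    unfolding M_def using \<alpha> K D by auto
  have \<rho>: "\<rho> > 0" "\<rho> \<le> 1 / 8" "\<rho> * M = 1 / 8"
    unfolding \<rho>_def using M(1) by (auto simp: divide_le_eq)
  have \<tau>: "\<tau> > 0" "\<tau> \<le> \<rho>" "\<tau> * M = \<rho> / 2"
    unfolding \<tau>_def using M(1) \<rho>(1) by (auto simp: divide_le_eq)
  have "\<alpha> * K * (3 * \<rho> + \<tau>) \<le> M * (4 * \<rho>)"
    using M \<tau> \<rho> \<alpha> K by (intro mult_mono) auto
  then have contraction: "\<alpha> * K * (3 * \<rho> + \<tau>) \<le> 1 / 2" using \<rho>(3) by (simp add: algebra_simps)
  have "\<alpha> * K * \<tau> \<le> M * \<tau>" using M(2) \<tau>(1) by (intro mult_right_mono) auto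
  then have drift: "\<alpha> * K * \<tau> \<le> \<rho> / 2" using \<tau>(3) by (simp add: mult.commute)
  have "K \<le> M * \<bar>D\<bar> / 2" using M(3) D by (simp add: divide_le_eq mult.commute)
  then have "K * (\<rho> + \<tau>) \<le> (M * \<bar>D\<bar> / 2) * (2 * \<rho>)" using \<tau> \<rho> K by (intro mult_mono) auto
  also have "\<dots> = (\<rho> * M) * \<bar>D\<bar>" by (simp add: algebra_simps)
  finally have stable: "K * (\<rho> + \<tau>) \<le> \<bar>D\<bar> / 8" using \<rho>(3) by simp
  show ?thesis using \<tau> \<rho>(2) contraction drift stable by (intro exI[of _ \<rho>] exI[of _ \<tau>]) auto
qed

locale fibre_curve = maximal_minor +
  fixes K \<rho> \<tau> :: real
  assumes K_ge_1: "K \<ge> 1"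
    and taylor_e: "\<And>i. i \<in> I \<Longrightarrow> taylor_near P \<theta> K (e i)"
    and lipschitz_jacobian: "\<And>i p. i \<in> I \<Longrightarrow> p \<in> P \<Longrightarrow> lipschitz_near P \<theta> K (peval (pdiff p (e i)))"
    and lipschitz_minor: "lipschitz_near P \<theta> K (\<lambda>x. det (jacobian e rs cs x))"
    and lipschitz_bordered_adj: "\<And>i k. i \<in> I \<Longrightarrow> k < r \<Longrightarrow>
        lipschitz_near P \<theta> K (\<lambda>x. adj_mat (jacobian e (rs @ [i]) (cs @ [j]) x) $$ (r, k))"
    and radii: "0 < \<tau>" "\<tau> \<le> \<rho>" "\<rho> + \<tau> \<le> 1"
    and contraction_factor: "inv_norm * K * (3 * \<rho> + \<tau>) \<le> 1 / 2"
    and drift_factor: "inv_norm * K * \<tau> \<le> \<rho> / 2"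
    and minor_stable: "K * (\<rho> + \<tau>) \<le> \<bar>det0\<bar> / 8"
begin

abbreviation in_ball :: "(nat \<Rightarrow> real) \<Rightarrow> bool" where
  "in_ball y \<equiv> l1_dist {..<r} y (\<lambda>_. 0) \<le> \<rho>"

lemma center_near: "l1_dist P \<theta> \<theta> \<le> 1"
  by (simp add: l1_dist_self)

lemma shifted_near: "in_ball y \<Longrightarrow> \<bar>t\<bar> \<le> \<tau> \<Longrightarrow> l1_dist P (shifted y t) \<theta> \<le> \<rho> + \<tau>"
  by (simp add: l1_dist_shifted_center)

lemma shifted_near_1: "in_ball y \<Longrightarrow> \<bar>t\<bar> \<le> \<tau> \<Longrightarrow> l1_dist P (shifted y t) \<theta> \<le> 1"
  using shifted_near radii(3) by fastforce

lemma residual_taylor: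
  assumes a: "a < r" and y: "in_ball y" "in_ball y'" and t: "\<bar>t\<bar> \<le> \<tau>" "\<bar>t'\<bar> \<le> \<tau>"
  shows "\<bar>residual a y t - residual a y' t' -
      ((\<Sum>c<r. peval (pdiff (cs ! c) (e (rs ! a))) (shifted y' t') * (y c - y' c))
        + peval (pdiff j (e (rs ! a))) (shifted y' t') * (t - t'))\<bar>
      \<le> K * (l1_dist P (shifted y t) (shifted y' t'))\<^sup>2"
    and "\<bar>residual a y t - residual a y' t'\<bar> \<le> K * l1_dist P (shifted y t) (shifted y' t')"
proof -
  note near = shifted_near_1[OF y(2) t(2)] shifted_near_1[OF y(1) t(1)]
  have eq: "residual a y t - residual a y' t'
      = peval (e (rs ! a)) (shifted y t) - peval (e (rs ! a)) (shifted y' t')"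
    unfolding residual_def by simp
  note taylor = taylor_nearD[OF taylor_e[OF rows_nth[OF a]] near]
  show "\<bar>residual a y t - residual a y' t' -
      ((\<Sum>c<r. peval (pdiff (cs ! c) (e (rs ! a))) (shifted y' t') * (y c - y' c))
        + peval (pdiff j (e (rs ! a))) (shifted y' t') * (t - t'))\<bar>
      \<le> K * (l1_dist P (shifted y t) (shifted y' t'))\<^sup>2"
    using taylor(3) unfolding eq dir_deriv_shifted .
  show "\<bar>residual a y t - residual a y' t'\<bar> \<le> K * l1_dist P (shifted y t) (shifted y' t')"
    using taylor(2) unfolding eq .
qed

lemma linearization_error:
  assumes a: "a < r" and y: "in_ball y" "in_ball y'" and t: "\<bar>t\<bar> \<le> \<tau>"
  shows "\<bar>(\<Sum>c<r. jac0 $$ (a, c) * (y c - y' c)) - (residual a y t - residual a y' t)\<bar>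
    \<le> K * (3 * \<rho> + \<tau>) * l1_dist {..<r} y y'"
proof -
  define d where "d = l1_dist {..<r} y y'"
  define u where "u = shifted y' t"
  have d0: "d \<ge> 0" unfolding d_def by (rule l1_dist_nonneg)
  have "d \<le> l1_dist {..<r} y (\<lambda>_. 0) + l1_dist {..<r} (\<lambda>_. 0) y'"
    unfolding d_def by (rule l1_dist_triangle)
  then have d2: "d \<le> 2 * \<rho>" using y by (simp add: l1_dist_commute)
  define Q where "Q = residual a y t - residual a y' t
      - (\<Sum>c<r. peval (pdiff (cs ! c) (e (rs ! a))) u * (y c - y' c))"
  have "\<bar>Q\<bar> \<le> K * d\<^sup>2"
    using residual_taylor(1)[OF a y t t] unfolding Q_def u_def by (simp add: l1_dist_shifted d_def)
  also have "K * d\<^sup>2 \<le> K * (2 * \<rho>) * d"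
  proof -
    have "d * d \<le> (2 * \<rho>) * d" using d2 d0 by (rule mult_right_mono)
    then show ?thesis using K_ge_1 by (simp add: power2_eq_square mult.assoc mult_left_mono)
  qed
  finally have Q: "\<bar>Q\<bar> \<le> K * (2 * \<rho>) * d" .
  have E: "\<bar>jac0 $$ (a, c) - peval (pdiff (cs ! c) (e (rs ! a))) u\<bar> \<le> K * (\<rho> + \<tau>)" if c: "c < r" for c
  proof -
    have "\<bar>peval (pdiff (cs ! c) (e (rs ! a))) u - peval (pdiff (cs ! c) (e (rs ! a))) \<theta>\<bar>
        \<le> K * l1_dist P u \<theta>"
      using lipschitz_nearD(2)[OF lipschitz_jacobian[OF rows_nth[OF a] cols_nth[OF c]]
          center_near shifted_near_1[OF y(2) t]] unfolding u_def .
    also have "\<dots> \<le> K * (\<rho> + \<tau>)"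
      using shifted_near[OF y(2) t] K_ge_1 unfolding u_def by simp
    finally show ?thesis using jac0_entry[OF a c] by (simp add: abs_minus_commute)
  qed
  have "\<bar>\<Sum>c<r. (jac0 $$ (a, c) - peval (pdiff (cs ! c) (e (rs ! a))) u) * (y c - y' c)\<bar>
      \<le> (\<Sum>c<r. K * (\<rho> + \<tau>) * \<bar>y c - y' c\<bar>)"
    by (rule order.trans[OF sum_abs], rule sum_mono) (auto simp: abs_mult intro!: mult_right_mono E)
  also have "\<dots> = K * (\<rho> + \<tau>) * d" unfolding d_def l1_dist_def by (simp add: sum_distrib_left)
  finally have "\<bar>\<Sum>c<r. (jac0 $$ (a, c) - peval (pdiff (cs ! c) (e (rs ! a))) u) * (y c - y' c)\<bar>
      \<le> K * (\<rho> + \<tau>) * d" .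
  moreover have "(\<Sum>c<r. jac0 $$ (a, c) * (y c - y' c)) - (residual a y t - residual a y' t)
      = (\<Sum>c<r. (jac0 $$ (a, c) - peval (pdiff (cs ! c) (e (rs ! a))) u) * (y c - y' c)) - Q"
    unfolding Q_def by (simp add: left_diff_distrib sum_subtractf)
  ultimately show ?thesis
    using Q unfolding d_def[symmetric] by (simp add: algebra_simps)
qed

lemma newton_contraction:
  assumes y: "in_ball y" "in_ball y'" and t: "\<bar>t\<bar> \<le> \<tau>"
  shows "l1_dist {..<r} (newton t y) (newton t y') \<le> l1_dist {..<r} y y' / 2"
proof -
  define d where "d = l1_dist {..<r} y y'"
  define w where "w a = (\<Sum>c<r. jac0 $$ (a, c) * (y c - y' c)) - (residual a y t - residual a y' t)"
    for a
  have "l1_dist {..<r} (newton t y) (newton t y') = (\<Sum>b<r. \<bar>(\<Sum>a<r. adj0 $$ (b, a) * w a) / det0\<bar>)"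
    unfolding l1_dist_def w_def by (rule sum.cong) (simp_all add: newton_diff)
  also have "\<dots> \<le> inv_norm * (K * (3 * \<rho> + \<tau>) * d)"
    by (rule sum_adj0_le) (use linearization_error[OF _ y t] in \<open>simp add: w_def d_def\<close>)
  also have "\<dots> = (inv_norm * K * (3 * \<rho> + \<tau>)) * d" by (simp add: algebra_simps)
  also have "\<dots> \<le> d / 2"
    using mult_right_mono[OF contraction_factor l1_dist_nonneg[of "{..<r}" y y']] by (simp add: d_def)
  finally show ?thesis unfolding d_def .
qed

lemma newton_param_lipschitz:
  assumes y: "in_ball y" and t: "\<bar>t\<bar> \<le> \<tau>" "\<bar>t'\<bar> \<le> \<tau>"
  shows "l1_dist {..<r} (newton t y) (newton t' y) \<le> inv_norm * K * \<bar>t - t'\<bar>"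
proof -
  have "l1_dist {..<r} (newton t y) (newton t' y)
      = (\<Sum>b<r. \<bar>(\<Sum>a<r. adj0 $$ (b, a) * (- (residual a y t - residual a y t'))) / det0\<bar>)"
    unfolding l1_dist_def by (rule sum.cong) (simp_all add: newton_diff)
  also have "\<dots> \<le> inv_norm * (K * \<bar>t - t'\<bar>)"
  proof (rule sum_adj0_le)
    fix a assume a: "a < r"
    show "\<bar>- (residual a y t - residual a y t')\<bar> \<le> K * \<bar>t - t'\<bar>"
      using residual_taylor(2)[OF a y y t] by (simp add: l1_dist_shifted l1_dist_self)
  qed
  finally show ?thesis by simp
qed

lemma newton_drift: "\<bar>t\<bar> \<le> \<tau> \<Longrightarrow> l1_dist {..<r} (newton t (\<lambda>_. 0)) (\<lambda>_. 0) \<le> \<rho> / 2"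
proof -
  assume t: "\<bar>t\<bar> \<le> \<tau>"
  have zero: "in_ball (\<lambda>_. 0)" "\<bar>0\<bar> \<le> \<tau>" using radii by (auto simp: l1_dist_self)
  have "newton 0 (\<lambda>_. 0) = (\<lambda>_. 0)"
    by (simp add: newton_def residual_def shifted_zero fun_eq_iff)
  then have "l1_dist {..<r} (newton t (\<lambda>_. 0)) (\<lambda>_. 0) = l1_dist {..<r} (newton t (\<lambda>_. 0)) (newton 0 (\<lambda>_. 0))"
    by simp
  also have "\<dots> \<le> inv_norm * K * \<bar>t\<bar>"
    using newton_param_lipschitz[OF zero(1) t zero(2)] by simp
  also have "\<dots> \<le> inv_norm * K * \<tau>"
    using t inv_norm_nonneg K_ge_1 by (intro mult_left_mono) auto
  finally show ?thesis using drift_factor by linarith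
qed

lemma newton_fixpoint_exists: "\<bar>t\<bar> \<le> \<tau> \<Longrightarrow> \<exists>y. in_ball y \<and> (\<forall>b<r. newton t y b = y b)"
  using l1_contraction_fixpoint[of "{..<r}" "newton t" "\<lambda>_. 0" \<rho>] newton_drift newton_contraction
  by auto

lemma newton_fixpoints_close:
  assumes y: "in_ball y" "in_ball y'" and t: "\<bar>t\<bar> \<le> \<tau>" "\<bar>t'\<bar> \<le> \<tau>"
    and fixed: "\<forall>b<r. newton t y b = y b" "\<forall>b<r. newton t' y' b = y' b"
  shows "l1_dist {..<r} y y' \<le> 2 * inv_norm * K * \<bar>t - t'\<bar>"
proof -
  have "l1_dist {..<r} y y' = l1_dist {..<r} (newton t y) (newton t' y')"
    by (rule l1_dist_cong) (use fixed in auto)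
  also have "\<dots> \<le> l1_dist {..<r} (newton t y) (newton t y') + l1_dist {..<r} (newton t y') (newton t' y')"
    by (rule l1_dist_triangle)
  also have "\<dots> \<le> l1_dist {..<r} y y' / 2 + inv_norm * K * \<bar>t - t'\<bar>"
    using newton_contraction[OF y t(1)] newton_param_lipschitz[OF y(2) t] by linarith
  finally show ?thesis by simp
qed

definition fixpoint :: "real \<Rightarrow> nat \<Rightarrow> real" where
  "fixpoint t = (SOME y. in_ball y \<and> (\<forall>b<r. newton t y b = y b))"

definition curve :: "real \<Rightarrow> param \<Rightarrow> real" where
  "curve t = shifted (fixpoint t) t"

lemma fixpoint: "\<bar>t\<bar> \<le> \<tau> \<Longrightarrow> in_ball (fixpoint t) \<and> (\<forall>b<r. newton t (fixpoint t) b = fixpoint t b)"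
  unfolding fixpoint_def using newton_fixpoint_exists by (rule someI_ex)

lemma curve_PiE: "curve t \<in> P \<rightarrow>\<^sub>E UNIV"
  unfolding curve_def by (rule shifted_PiE)

lemma curve_j: "curve t j = \<theta> j + t"
  unfolding curve_def by (rule shifted_j)

lemma curve_near: "\<bar>t\<bar> \<le> \<tau> \<Longrightarrow> l1_dist P (curve t) \<theta> \<le> \<rho> + \<tau>"
  unfolding curve_def using fixpoint shifted_near by blast

lemma curve_near_1: "\<bar>t\<bar> \<le> \<tau> \<Longrightarrow> l1_dist P (curve t) \<theta> \<le> 1"
  unfolding curve_def using fixpoint shifted_near_1 by blast

lemma curve_rows: "\<bar>t\<bar> \<le> \<tau> \<Longrightarrow> a < r \<Longrightarrow> peval (e (rs ! a)) (curve t) = peval (e (rs ! a)) \<theta>"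
  using residual_zero_if_fixed[of t "fixpoint t" a] fixpoint[of t]
  unfolding residual_def curve_def by simp

lemma curve_lipschitz:
  "\<bar>s\<bar> \<le> \<tau> \<Longrightarrow> \<bar>t\<bar> \<le> \<tau> \<Longrightarrow> l1_dist P (curve s) (curve t) \<le> (2 * inv_norm * K + 1) * \<bar>s - t\<bar>"
  using newton_fixpoints_close[of "fixpoint s" "fixpoint t" s t] fixpoint[of s] fixpoint[of t]
  unfolding curve_def l1_dist_shifted by (simp add: algebra_simps)

lemma curve_zero: "curve 0 = \<theta>"
proof -
  have zero: "in_ball (\<lambda>_. 0)" "\<bar>0::real\<bar> \<le> \<tau>" using radii by (auto simp: l1_dist_self)
  have "\<forall>b<r. newton 0 (\<lambda>_. 0) b = 0"
    by (simp add: newton_def residual_def shifted_zero)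
  then have "l1_dist {..<r} (fixpoint 0) (\<lambda>_. 0) \<le> 0"
    using newton_fixpoints_close[of "fixpoint 0" "\<lambda>_. 0" 0 0] fixpoint[of 0] zero by simp
  then have "fixpoint 0 b = 0" if "b < r" for b
    using abs_le_l1_dist[of "{..<r}" b "fixpoint 0" "\<lambda>_. 0"] that by simp
  then show ?thesis unfolding curve_def using shifted_cong[of "fixpoint 0" "\<lambda>_. 0"] shifted_zero by simp
qed

lemma bordered_increment:
  assumes k: "k < Suc r"
  shows "(\<Sum>q<Suc r. jacobian e (rs @ [i]) (cs @ [j]) (curve t) $$ (k, q) *
      (if q < r then fixpoint s q - fixpoint t q else s - t))
    = dir_deriv P (e ((rs @ [i]) ! k)) (curve t) (\<lambda>p. curve s p - curve t p)"
proof -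
  let ?B = "jacobian e (rs @ [i]) (cs @ [j]) (curve t)"
  have "(\<Sum>q<Suc r. ?B $$ (k, q) * (if q < r then fixpoint s q - fixpoint t q else s - t))
      = (\<Sum>q<r. ?B $$ (k, q) * (fixpoint s q - fixpoint t q)) + ?B $$ (k, r) * (s - t)"
    by (simp add: sum.lessThan_Suc)
  also have "(\<Sum>q<r. ?B $$ (k, q) * (fixpoint s q - fixpoint t q))
      = (\<Sum>q<r. peval (pdiff (cs ! q) (e ((rs @ [i]) ! k))) (curve t) * (fixpoint s q - fixpoint t q))"
    using k by (intro sum.cong) (simp_all add: jacobian_def nth_append cols(3))
  also have "?B $$ (k, r) = peval (pdiff j (e ((rs @ [i]) ! k))) (curve t)"
    using k by (simp add: jacobian_def nth_append cols(3))
  finally show ?thesis unfolding curve_def dir_deriv_shifted by simp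
qed

lemma row_increment_small:
  assumes a: "a < r" and s: "\<bar>s\<bar> \<le> \<tau>" and t: "\<bar>t\<bar> \<le> \<tau>"
  shows "\<bar>dir_deriv P (e (rs ! a)) (curve t) (\<lambda>p. curve s p - curve t p)\<bar>
    \<le> K * (l1_dist P (curve s) (curve t))\<^sup>2"
  using taylor_nearD(3)[OF taylor_e[OF rows_nth[OF a]] curve_near_1[OF t] curve_near_1[OF s]]
  by (simp add: curve_rows[OF s a] curve_rows[OF t a])

lemma bordered_corner_large:
  assumes t: "\<bar>t\<bar> \<le> \<tau>"
  shows "\<bar>adj_mat (jacobian e (rs @ [i]) (cs @ [j]) (curve t)) $$ (r, r)\<bar> \<ge> \<bar>det0\<bar> / 2"
proof -
  have "\<bar>det (jacobian e rs cs (curve t)) - det0\<bar> \<le> K * l1_dist P (curve t) \<theta>"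
    using lipschitz_nearD(2)[OF lipschitz_minor center_near curve_near_1[OF t]]
    by (simp add: det0_def jac0_def)
  also have "\<dots> \<le> K * (\<rho> + \<tau>)" using curve_near[OF t] K_ge_1 by simp
  also have "\<dots> \<le> \<bar>det0\<bar> / 8" by (rule minor_stable)
  finally show ?thesis unfolding bordered_corner_adj by linarith
qed

text \<open>Since the bordered Jacobian is singular, the last row of its adjugate annihilates it; the
  corner entry of that row is close to \<open>det0\<close>, while the other rows of the increment are
  quadratically small.\<close>
lemma last_increment_small:
  assumes i: "i \<in> I" "i \<notin> set rs" and s: "\<bar>s\<bar> \<le> \<tau>" and t: "\<bar>t\<bar> \<le> \<tau>"
  shows "\<bar>dir_deriv P (e i) (curve t) (\<lambda>p. curve s p - curve t p)\<bar>
    \<le> 2 * r * K\<^sup>2 / \<bar>det0\<bar> * (l1_dist P (curve s) (curve t))\<^sup>2"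
proof -
  define B where "B = jacobian e (rs @ [i]) (cs @ [j]) (curve t)"
  define d where "d = l1_dist P (curve s) (curve t)"
  define z where "z q = (if q < r then fixpoint s q - fixpoint t q else s - t)" for q
  define V where "V k = dir_deriv P (e ((rs @ [i]) ! k)) (curve t) (\<lambda>p. curve s p - curve t p)" for k
  have B: "B \<in> carrier_mat (Suc r) (Suc r)"
    unfolding B_def using cols(3) by (simp add: jacobian_def)
  have "(\<Sum>k<Suc r. adj_mat B $$ (r, k) * V k) = det B * z r"
    using mat_mult_smult_one_apply[OF adj_mat(1)[OF B] B adj_mat(3)[OF B], of r z] bordered_increment
    unfolding B_def V_def z_def by simp
  then have annihilate: "(\<Sum>k<r. adj_mat B $$ (r, k) * V k) + adj_mat B $$ (r, r) * V r = 0"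
    using bordered_minor_zero[OF i curve_PiE] unfolding B_def by (simp add: sum.lessThan_Suc)
  have "\<bar>adj_mat B $$ (r, k) * V k\<bar> \<le> K * (K * d\<^sup>2)" if k: "k < r" for k
  proof -
    have "\<bar>adj_mat B $$ (r, k)\<bar> \<le> K"
      using lipschitz_nearD(1)[OF lipschitz_bordered_adj[OF i(1) k] center_near curve_near_1[OF t]]
      unfolding B_def .
    moreover have "\<bar>V k\<bar> \<le> K * d\<^sup>2"
      using row_increment_small[OF k s t] k unfolding V_def d_def by (simp add: nth_append)
    ultimately show ?thesis unfolding abs_mult using K_ge_1 by (intro mult_mono) auto
  qed
  then have "(\<Sum>k<r. \<bar>adj_mat B $$ (r, k) * V k\<bar>) \<le> (\<Sum>k<r. K * (K * d\<^sup>2))"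
    by (intro sum_mono) simp
  then have "(\<Sum>k<r. \<bar>adj_mat B $$ (r, k) * V k\<bar>) \<le> r * K * (K * d\<^sup>2)"
    by (simp add: mult.assoc)
  then have "\<bar>\<Sum>k<r. adj_mat B $$ (r, k) * V k\<bar> \<le> r * K * (K * d\<^sup>2)"
    using sum_abs[of "\<lambda>k. adj_mat B $$ (r, k) * V k" "{..<r}"] by linarith
  then have "\<bar>adj_mat B $$ (r, r)\<bar> * \<bar>V r\<bar> \<le> r * K * (K * d\<^sup>2)"
    using annihilate by (simp add: abs_mult[symmetric] eq_neg_iff_add_eq_0[symmetric] add.commute)
  moreover have "\<bar>det0\<bar> / 2 * \<bar>V r\<bar> \<le> \<bar>adj_mat B $$ (r, r)\<bar> * \<bar>V r\<bar>"
    using bordered_corner_large[OF t] unfolding B_def by (rule mult_right_mono) simp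
  ultimately have "\<bar>det0\<bar> / 2 * \<bar>V r\<bar> \<le> r * K * (K * d\<^sup>2)" by linarith
  then show ?thesis
    using det0_nonzero unfolding V_def d_def by (simp add: field_simps power2_eq_square nth_append)
qed

lemma other_increment_quadratic:
  assumes i: "i \<in> I" "i \<notin> set rs"
  shows "\<exists>C. \<forall>s t. \<bar>s\<bar> \<le> \<tau> \<longrightarrow> \<bar>t\<bar> \<le> \<tau> \<longrightarrow>
    \<bar>peval (e i) (curve s) - peval (e i) (curve t)\<bar> \<le> C * (s - t)\<^sup>2"
proof (intro exI allI impI)
  fix s t assume s: "\<bar>s\<bar> \<le> \<tau>" and t: "\<bar>t\<bar> \<le> \<tau>"
  define d where "d = l1_dist P (curve s) (curve t)"
  have "\<bar>peval (e i) (curve s) - peval (e i) (curve t)\<bar> \<le> 2 * r * K\<^sup>2 / \<bar>det0\<bar> * d\<^sup>2 + K * d\<^sup>2"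
    using taylor_nearD(3)[OF taylor_e[OF i(1)] curve_near_1[OF t] curve_near_1[OF s]]
      last_increment_small[OF i s t] unfolding d_def by linarith
  also have "\<dots> = (2 * r * K\<^sup>2 / \<bar>det0\<bar> + K) * d\<^sup>2" by (simp add: algebra_simps)
  also have "\<dots> \<le> (2 * r * K\<^sup>2 / \<bar>det0\<bar> + K) * ((2 * inv_norm * K + 1) * \<bar>s - t\<bar>)\<^sup>2"
    using curve_lipschitz[OF s t] l1_dist_nonneg K_ge_1 unfolding d_def
    by (intro mult_left_mono power_mono) auto
  also have "\<dots> = (2 * r * K\<^sup>2 / \<bar>det0\<bar> + K) * (2 * inv_norm * K + 1)\<^sup>2 * (s - t)\<^sup>2"
    by (simp add: power_mult_distrib)
  finally show "\<bar>peval (e i) (curve s) - peval (e i) (curve t)\<bar>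
      \<le> (2 * r * K\<^sup>2 / \<bar>det0\<bar> + K) * (2 * inv_norm * K + 1)\<^sup>2 * (s - t)\<^sup>2" .
qed

lemma curve_in_fibre:
  assumes t: "\<bar>t\<bar> < \<tau>" and i: "i \<in> I"
  shows "peval (e i) (curve t) = peval (e i) \<theta>"
proof (cases "i \<in> set rs")
  case True
  then obtain a where "a < r" "i = rs ! a" by (auto simp: in_set_conv_nth)
  then show ?thesis using curve_rows t by simp
next
  case False
  then obtain C where C: "\<And>s t. \<bar>s\<bar> \<le> \<tau> \<Longrightarrow> \<bar>t\<bar> \<le> \<tau> \<Longrightarrow>
      \<bar>peval (e i) (curve s) - peval (e i) (curve t)\<bar> \<le> C * (s - t)\<^sup>2"
    using other_increment_quadratic[OF i] by blast
  have "peval (e i) (curve t) = peval (e i) (curve 0)"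
  proof (rule eq_if_increments_quadratic[where g = "\<lambda>x. peval (e i) (curve x)" and C = C])
    fix s t' assume "s \<in> {-\<tau><..<\<tau>}" "t' \<in> {-\<tau><..<\<tau>}"
    then show "\<bar>peval (e i) (curve s) - peval (e i) (curve t')\<bar> \<le> C * (s - t')\<^sup>2"
      by (intro C) auto
  qed (use t radii(1) in auto)
  then show ?thesis by (simp add: curve_zero)
qed

lemma curve_fibre_infinite: "infinite {x \<in> P \<rightarrow>\<^sub>E UNIV. \<forall>i\<in>I. peval (e i) x = peval (e i) \<theta>}"
proof -
  have "curve ` {-\<tau><..<\<tau>} \<subseteq> {x \<in> P \<rightarrow>\<^sub>E UNIV. \<forall>i\<in>I. peval (e i) x = peval (e i) \<theta>}"
    using curve_PiE curve_in_fibre by auto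
  moreover have "inj_on curve {-\<tau><..<\<tau>}"
    by (rule inj_onI) (metis add_left_cancel curve_j)
  then have "infinite (curve ` {-\<tau><..<\<tau>})"
    using radii(1) finite_imageD[of curve "{-\<tau><..<\<tau>}"] by auto
  ultimately show ?thesis using infinite_super by blast
qed

end

lemma (in maximal_minor) fibre_curve_exists: "\<exists>K \<rho> \<tau>. fibre_curve P I e rs cs j \<theta> K \<rho> \<tau>"
proof -
  obtain K where K: "K \<ge> 1" "\<forall>f\<in>jacobian_family. lipschitz_near P \<theta> K f"
    using lipschitz_near_uniform[OF finite_P finite_jacobian_family] poly_fun_jacobian_family by blast
  obtain K' where K': "K' \<ge> K" "\<forall>e'\<in>e ` I. taylor_near P \<theta> K' e'"
    using taylor_near_uniform[OF finite_P finite_imageI[OF finite_I]] pvars_e by blast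
  obtain \<rho> \<tau> where radii: "0 < \<tau>" "\<tau> \<le> \<rho>" "\<rho> + \<tau> \<le> 1" "inv_norm * K' * (3 * \<rho> + \<tau>) \<le> 1 / 2"
    "inv_norm * K' * \<tau> \<le> \<rho> / 2" "K' * (\<rho> + \<tau>) \<le> \<bar>det0\<bar> / 8"
    using contraction_radii_exist[of K' inv_norm det0] K(1) K'(1) inv_norm_nonneg det0_nonzero by auto
  have "lipschitz_near P \<theta> K' f" if "f \<in> jacobian_family" for f
    using K(2) K'(1) that lipschitz_near_mono by blast
  then have "fibre_curve P I e rs cs j \<theta> K' \<rho> \<tau>"
    unfolding fibre_curve_def fibre_curve_axioms_def
    using maximal_minor_axioms K(1) K' radii jacobian_family_members by auto
  then show ?thesis by blast
qed

lemma (in maximal_minor) infinite_fibre: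
  "infinite {x \<in> P \<rightarrow>\<^sub>E UNIV. \<forall>i\<in>I. peval (e i) x = peval (e i) \<theta>}"
  using fibre_curve_exists fibre_curve.curve_fibre_infinite by blast

section \<open>Generic fibres of polynomial maps with fewer components than variables\<close>

definition nonvanishing_minor ::
  "param set \<Rightarrow> 'i set \<Rightarrow> ('i \<Rightarrow> param pexpr) \<Rightarrow> 'i list \<Rightarrow> param list \<Rightarrow> (param \<Rightarrow> real) \<Rightarrow> bool" where
  "nonvanishing_minor P I e rs cs x \<longleftrightarrow> distinct rs \<and> set rs \<subseteq> I \<and> distinct cs \<and> set cs \<subseteq> P \<and>
     length cs = length rs \<and> x \<in> P \<rightarrow>\<^sub>E UNIV \<and> det (jacobian e rs cs x) \<noteq> 0"

lemma nonvanishing_minor_size: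
  "finite I \<Longrightarrow> nonvanishing_minor P I e rs cs x \<Longrightarrow> length rs \<le> card I"
  unfolding nonvanishing_minor_def by (metis card_mono distinct_card)

lemma exists_maximal_minor:
  assumes finite_P: "finite P" and finite_I: "finite I" and card: "card I < card P"
    and pvars_e: "\<And>i. i \<in> I \<Longrightarrow> pvars (e i) \<subseteq> P"
  obtains rs cs j x0 where "maximal_minor P I e rs cs j x0"
    and "\<And>\<theta>. \<theta> \<in> P \<rightarrow>\<^sub>E UNIV \<Longrightarrow> det (jacobian e rs cs \<theta>) \<noteq> 0 \<Longrightarrow> maximal_minor P I e rs cs j \<theta>"
proof -
  define ranks where "ranks = {length rs | rs. \<exists>cs x. nonvanishing_minor P I e rs cs x}"
  have "ranks \<subseteq> {..card I}"
    unfolding ranks_def using nonvanishing_minor_size[OF finite_I] by auto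
  then have finite_ranks: "finite ranks" by (rule finite_subset) simp
  have "nonvanishing_minor P I e [] [] (\<lambda>p\<in>P. 0)"
    unfolding nonvanishing_minor_def by (simp add: det_jacobian_Nil)
  then have "0 \<in> ranks" unfolding ranks_def by force
  then have "Max ranks \<in> ranks" using finite_ranks by (intro Max_in) auto
  then obtain rs cs x0 where rank: "Max ranks = length rs" and minor: "nonvanishing_minor P I e rs cs x0"
    unfolding ranks_def by blast
  have "card (set cs) \<le> card I"
    using nonvanishing_minor_size[OF finite_I minor] minor distinct_card
    unfolding nonvanishing_minor_def by metis
  then have "\<not> P \<subseteq> set cs" using card card_mono[OF finite_set, of P cs] by linarith
  then obtain j where j: "j \<in> P" "j \<notin> set cs" by blast
  have maximal: "det (jacobian e (rs @ [i]) (cs @ [j]) x) = 0"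
    if "i \<in> I" "i \<notin> set rs" "x \<in> P \<rightarrow>\<^sub>E UNIV" for i x
  proof (rule ccontr)
    assume "det (jacobian e (rs @ [i]) (cs @ [j]) x) \<noteq> 0"
    then have "nonvanishing_minor P I e (rs @ [i]) (cs @ [j]) x"
      using minor that j unfolding nonvanishing_minor_def by auto
    then have "length (rs @ [i]) \<in> ranks" unfolding ranks_def by blast
    then have "length (rs @ [i]) \<le> Max ranks" by (rule Max_ge[OF finite_ranks])
    then show False using rank by simp
  qed
  have "maximal_minor P I e rs cs j \<theta>" if "\<theta> \<in> P \<rightarrow>\<^sub>E UNIV" "det (jacobian e rs cs \<theta>) \<noteq> 0" for \<theta>
    by unfold_locales
      (use finite_P finite_I pvars_e minor j that maximal in \<open>auto simp: nonvanishing_minor_def\<close>)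
  then show ?thesis using that minor unfolding nonvanishing_minor_def by blast
qed

theorem generic_infinite_fibres:
  fixes c :: "'i \<Rightarrow> (param \<Rightarrow> real) \<Rightarrow> real"
  assumes finite_P: "finite P" and finite_I: "finite I" and card: "card I < card P"
    and poly: "\<And>i. i \<in> I \<Longrightarrow> poly_fun P (c i)"
  shows "\<exists>f. poly_fun P f \<and> (\<exists>\<theta>\<in>P \<rightarrow>\<^sub>E UNIV. f \<theta> \<noteq> 0) \<and>
    (\<forall>\<theta>\<in>P \<rightarrow>\<^sub>E UNIV. f \<theta> \<noteq> 0 \<longrightarrow> infinite {\<theta>' \<in> P \<rightarrow>\<^sub>E UNIV. \<forall>i\<in>I. c i \<theta>' = c i \<theta>})"
proof -
  define e where "e i = (SOME e. pvars e \<subseteq> P \<and> c i = peval e)" for i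
  have e: "pvars (e i) \<subseteq> P \<and> c i = peval (e i)" if "i \<in> I" for i
    unfolding e_def by (rule someI_ex) (use poly[OF that] poly_fun_iff_peval in blast)
  obtain rs cs j x0 where x0: "maximal_minor P I e rs cs j x0"
    and generic: "\<And>\<theta>. \<theta> \<in> P \<rightarrow>\<^sub>E UNIV \<Longrightarrow> det (jacobian e rs cs \<theta>) \<noteq> 0 \<Longrightarrow> maximal_minor P I e rs cs j \<theta>"
    using exists_maximal_minor[OF finite_P finite_I card] e by blast
  have fibre_eq: "{\<theta>' \<in> P \<rightarrow>\<^sub>E UNIV. \<forall>i\<in>I. c i \<theta>' = c i \<theta>}
      = {\<theta>' \<in> P \<rightarrow>\<^sub>E UNIV. \<forall>i\<in>I. peval (e i) \<theta>' = peval (e i) \<theta>}" for \<theta>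
    using e by auto
  show ?thesis
  proof (intro exI conjI ballI impI)
    have "\<forall>i\<in>set rs. pvars (e i) \<subseteq> P"
      using maximal_minor.rows(2)[OF x0] e by blast
    then show "poly_fun P (\<lambda>x. det (jacobian e rs cs x))"
      using poly_fun_det_jacobian maximal_minor.cols(3)[OF x0] by blast
    show "\<exists>\<theta>\<in>P \<rightarrow>\<^sub>E UNIV. det (jacobian e rs cs \<theta>) \<noteq> 0"
      using maximal_minor.\<theta>[OF x0] maximal_minor.minor_nonzero[OF x0] by blast
    fix \<theta> assume "\<theta> \<in> P \<rightarrow>\<^sub>E UNIV" "det (jacobian e rs cs \<theta>) \<noteq> 0"
    then show "infinite {\<theta>' \<in> P \<rightarrow>\<^sub>E UNIV. \<forall>i\<in>I. c i \<theta>' = c i \<theta>}"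
      unfolding fibre_eq by (rule maximal_minor.infinite_fibre[OF generic])
  qed
qed

section \<open>Polynomial dependence of the input-output coefficients on the parameters\<close>

definition poly_coeffs_fun :: "param set \<Rightarrow> ((param \<Rightarrow> real) \<Rightarrow> real poly) \<Rightarrow> bool" where
  "poly_coeffs_fun P F \<longleftrightarrow> (\<forall>k. poly_fun P (\<lambda>\<theta>. coeff (F \<theta>) k))"

lemma fun_subring_poly_coeffs_fun: "fun_subring (poly_coeffs_fun P)"
  unfolding fun_subring_def
proof (intro conjI allI impI)
  show "poly_coeffs_fun P (\<lambda>_. p)" for p
    unfolding poly_coeffs_fun_def by (auto intro: pf_const)
  show "poly_coeffs_fun P (\<lambda>x. F x + G x)" if "poly_coeffs_fun P F" "poly_coeffs_fun P G" for F G
    using that unfolding poly_coeffs_fun_def by (auto intro: pf_add)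
  show "poly_coeffs_fun P (\<lambda>x. F x * G x)" if "poly_coeffs_fun P F" "poly_coeffs_fun P G" for F G
    using that unfolding poly_coeffs_fun_def coeff_mult
    by (auto intro!: fun_subring_sum[OF fun_subring_poly_fun] pf_mult)
qed

lemma poly_coeffs_fun_const_poly: "poly_fun P f \<Longrightarrow> poly_coeffs_fun P (\<lambda>\<theta>. [:f \<theta>:])"
  unfolding poly_coeffs_fun_def
proof
  fix k assume "poly_fun P f"
  then show "poly_fun P (\<lambda>\<theta>. coeff [:f \<theta>:] k)" by (cases k) (auto intro: pf_const)
qed

lemma finite_param_labels: "finite E \<Longrightarrow> finite Lk \<Longrightarrow> finite (param_labels E Lk)"
  unfolding param_labels_def by auto

lemma card_param_labels:
  assumes "finite E" "finite Lk"
  shows "card (param_labels E Lk) = card E + card Lk"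
proof -
  have "card ((\<lambda>(k, l). EdgeP k l) ` E) = card E" by (rule card_image) (auto simp: inj_on_def)
  moreover have "card (LeakP ` Lk) = card Lk" by (rule card_image) (auto simp: inj_on_def)
  ultimately show ?thesis
    unfolding param_labels_def using assms by (subst card_Un_disjoint) auto
qed

lemma poly_fun_if: "poly_fun P f \<Longrightarrow> poly_fun P g \<Longrightarrow> poly_fun P (\<lambda>\<theta>. if b then f \<theta> else g \<theta>)"
  by (cases b) auto

lemma poly_fun_comp_matrix_entry:
  assumes "finite E" and "r < n" "c < n"
  shows "poly_fun (param_labels E Lk) (\<lambda>\<theta>. comp_matrix n E Lk \<theta> $$ (r, c))"
proof -
  let ?P = "param_labels E Lk"
  have "{m. (Suc r, m) \<in> E} \<subseteq> snd ` E" by force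
  then have "finite {m. (Suc r, m) \<in> E}" by (rule finite_subset) (use assms(1) in simp)
  then have outflow: "poly_fun ?P (\<lambda>\<theta>. \<Sum>m\<in>{m. (Suc r, m) \<in> E}. \<theta> (EdgeP (Suc r) m))"
    by (rule fun_subring_sum[OF fun_subring_poly_fun]) (auto intro!: pf_var simp: param_labels_def)
  have leak: "poly_fun ?P (\<lambda>\<theta>. if Suc r \<in> Lk then \<theta> (LeakP (Suc r)) else 0)"
    by (cases "Suc r \<in> Lk") (auto intro!: pf_var pf_const simp: param_labels_def)
  have inflow: "poly_fun ?P (\<lambda>\<theta>. if (Suc c, Suc r) \<in> E then \<theta> (EdgeP (Suc c) (Suc r)) else 0)"
    by (cases "(Suc c, Suc r) \<in> E") (auto intro!: pf_var pf_const simp: param_labels_def image_iff)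
  have "poly_fun ?P (\<lambda>\<theta>. if r = c
      then - (\<Sum>m\<in>{m. (Suc r, m) \<in> E}. \<theta> (EdgeP (Suc r) m)) - (if Suc r \<in> Lk then \<theta> (LeakP (Suc r)) else 0)
      else if (Suc c, Suc r) \<in> E then \<theta> (EdgeP (Suc c) (Suc r)) else 0)"
    by (intro poly_fun_if fun_subring_diff[OF fun_subring_poly_fun]
        fun_subring_uminus[OF fun_subring_poly_fun] outflow leak inflow)
  then show ?thesis using assms(2,3) unfolding comp_matrix_def by (simp add: Let_def)
qed

lemma dI_minus_A_carrier: "dI_minus_A n E Lk \<theta> \<in> carrier_mat n n"
  unfolding dI_minus_A_def by simp

lemma dI_minus_A_entry:
  "r < n \<Longrightarrow> c < n \<Longrightarrow>
    dI_minus_A n E Lk \<theta> $$ (r, c) = (if r = c then [:0, 1:] else 0) - [:comp_matrix n E Lk \<theta> $$ (r, c):]"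
  unfolding dI_minus_A_def by simp

lemma poly_coeffs_fun_dI_minus_A_entry:
  assumes "finite E" "r < n" "c < n"
  shows "poly_coeffs_fun (param_labels E Lk) (\<lambda>\<theta>. dI_minus_A n E Lk \<theta> $$ (r, c))"
  unfolding dI_minus_A_entry[OF assms(2,3)]
  by (intro fun_subring_diff[OF fun_subring_poly_coeffs_fun] fun_subring_const[OF fun_subring_poly_coeffs_fun]
      poly_coeffs_fun_const_poly poly_fun_comp_matrix_entry assms)

lemma poly_fun_io_coeff:
  assumes "finite E"
  shows "poly_fun (param_labels E Lk) (io_coeff n E Lk idx)"
proof -
  let ?Q = "poly_coeffs_fun (param_labels E Lk)"
  have entries: "?Q (\<lambda>\<theta>. dI_minus_A n E Lk \<theta> $$ (r, c))" if "r < n" "c < n" for r c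
    using poly_coeffs_fun_dI_minus_A_entry[OF assms that] .
  obtain i jo k where idx: "idx = (i, jo, k)" by (cases idx) auto
  show ?thesis
  proof (cases jo)
    case None
    have "?Q (\<lambda>\<theta>. det (dI_minus_A n E Lk \<theta>))"
    proof (rule fun_subring_det[OF fun_subring_poly_coeffs_fun])
      show "dI_minus_A n E Lk \<theta> \<in> carrier_mat n n" for \<theta> by (rule dI_minus_A_carrier)
    qed (rule entries)
    then show ?thesis unfolding idx None io_coeff_def[abs_def] poly_coeffs_fun_def by simp
  next
    case (Some j)
    have "?Q (\<lambda>\<theta>. det (mat_delete (dI_minus_A n E Lk \<theta>) (j - 1) (i - 1)))"
    proof (rule fun_subring_det_mat_delete[OF fun_subring_poly_coeffs_fun])
      show "dI_minus_A n E Lk \<theta> \<in> carrier_mat n n" for \<theta> by (rule dI_minus_A_carrier)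
    qed (rule entries)
    then have "?Q (\<lambda>\<theta>. (-1) ^ (i + j) * det (mat_delete (dI_minus_A n E Lk \<theta>) (j - 1) (i - 1)))"
      by (intro fun_subring_mult[OF fun_subring_poly_coeffs_fun]
          fun_subring_const[OF fun_subring_poly_coeffs_fun])
    then show ?thesis unfolding idx Some io_coeff_def[abs_def] poly_coeffs_fun_def by simp
  qed
qed

section \<open>Constant coefficients of the input-output equations\<close>

lemma comp_matrix_carrier: "comp_matrix n E Lk \<theta> \<in> carrier_mat n n"
  unfolding comp_matrix_def by simp

lemma dI_minus_A_eq_char_poly_matrix: "dI_minus_A n E Lk \<theta> = char_poly_matrix (comp_matrix n E Lk \<theta>)"
  by (rule eq_matI) (auto simp: dI_minus_A_def char_poly_matrix_def comp_matrix_def)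

lemma coeff_det_dI_minus_A_top: "coeff (det (dI_minus_A n E Lk \<theta>)) n = 1"
  using degree_monic_char_poly[OF comp_matrix_carrier, of n E Lk \<theta>]
  unfolding dI_minus_A_eq_char_poly_matrix char_poly_def by (auto intro: coeff_eq_0)

lemma mat_delete_char_poly_matrix:
  "A \<in> carrier_mat n n \<Longrightarrow> a < n \<Longrightarrow> mat_delete (char_poly_matrix A) a a = char_poly_matrix (mat_delete A a a)"
  by (rule eq_matI) (auto simp: mat_delete_def char_poly_matrix_def)

lemma coeff_det_principal_minor:
  assumes a: "a < n"
  shows "coeff (det (mat_delete (dI_minus_A n E Lk \<theta>) a a)) (n - 1) = 1"
    "k > n - 1 \<Longrightarrow> coeff (det (mat_delete (dI_minus_A n E Lk \<theta>) a a)) k = 0"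
proof -
  let ?A = "comp_matrix n E Lk \<theta>"
  have "det (mat_delete (dI_minus_A n E Lk \<theta>) a a) = char_poly (mat_delete ?A a a)"
    unfolding dI_minus_A_eq_char_poly_matrix char_poly_def
    using mat_delete_char_poly_matrix[OF comp_matrix_carrier a] by simp
  then show "coeff (det (mat_delete (dI_minus_A n E Lk \<theta>) a a)) (n - 1) = 1"
    "k > n - 1 \<Longrightarrow> coeff (det (mat_delete (dI_minus_A n E Lk \<theta>) a a)) k = 0"
    using degree_monic_char_poly[OF mat_delete_carrier[OF comp_matrix_carrier]] by (auto intro: coeff_eq_0)
qed

lemma comp_matrix_column_sum:
  assumes E: "E \<subseteq> {1..n} \<times> {1..n}" and nl: "\<forall>k. (k, k) \<notin> E" and c: "c < n"
  shows "(\<Sum>i<n. comp_matrix n E {} \<theta> $$ (i, c)) = 0"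
proof -
  define g where "g m = \<theta> (EdgeP (Suc c) m)" for m
  have ent: "comp_matrix n E {} \<theta> $$ (i, c) = (if i = c then - (\<Sum>m\<in>{m. (Suc c, m) \<in> E}. g m)
      else if (Suc c, Suc i) \<in> E then g (Suc i) else 0)" if "i < n" for i
    using that c by (auto simp: comp_matrix_def Let_def g_def)
  have fin: "finite {m. (Suc c, m) \<in> E}"
    by (rule finite_subset[of _ "{1..n}"]) (use E in auto)
  have "(\<Sum>i<n. comp_matrix n E {} \<theta> $$ (i, c)) = comp_matrix n E {} \<theta> $$ (c, c)
      + (\<Sum>i\<in>{..<n} - {c}. comp_matrix n E {} \<theta> $$ (i, c))"
    using c by (subst sum.remove[of _ c]) auto
  also have "(\<Sum>i\<in>{..<n} - {c}. comp_matrix n E {} \<theta> $$ (i, c))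
      = (\<Sum>i\<in>{..<n} - {c}. if (Suc c, Suc i) \<in> E then g (Suc i) else 0)"
    by (rule sum.cong) (auto simp: ent)
  also have "\<dots> = (\<Sum>i\<in>{i \<in> {..<n} - {c}. (Suc c, Suc i) \<in> E}. g (Suc i))"
    by (rule sum.inter_filter[symmetric]) simp
  also have "\<dots> = (\<Sum>m\<in>Suc ` {i \<in> {..<n} - {c}. (Suc c, Suc i) \<in> E}. g m)"
    by (subst sum.reindex) auto
  also have "Suc ` {i \<in> {..<n} - {c}. (Suc c, Suc i) \<in> E} = {m. (Suc c, m) \<in> E}"
  proof (intro equalityI subsetI)
    fix m assume "m \<in> Suc ` {i \<in> {..<n} - {c}. (Suc c, Suc i) \<in> E}"
    then show "m \<in> {m. (Suc c, m) \<in> E}" by auto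
  next
    fix m assume "m \<in> {m. (Suc c, m) \<in> E}"
    then have m: "(Suc c, m) \<in> E" by simp
    then have "m \<in> {1..n}" "m \<noteq> Suc c" using E nl by auto
    then obtain i where "m = Suc i" "i < n" "i \<noteq> c" by (cases m) auto
    then show "m \<in> Suc ` {i \<in> {..<n} - {c}. (Suc c, Suc i) \<in> E}" using m by auto
  qed
  finally show ?thesis using ent[OF c] by simp
qed

lemma coeff_0_det_dI_minus_A_no_leaks:
  assumes E: "E \<subseteq> {1..n} \<times> {1..n}" and nl: "\<forall>k. (k, k) \<notin> E" and n: "n > 0"
  shows "coeff (det (dI_minus_A n E {} \<theta>)) 0 = 0"
proof -
  define A where "A = comp_matrix n E {} \<theta>"
  have Ac: "A \<in> carrier_mat n n" unfolding A_def by (rule comp_matrix_carrier)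
  have "coeff (det (dI_minus_A n E {} \<theta>)) 0 = poly (char_poly A) 0"
    unfolding A_def dI_minus_A_eq_char_poly_matrix char_poly_def by (simp add: poly_0_coeff_0)
  also have "\<dots> = det (- (char_matrix A 0))" by (rule char_poly_matrix[OF Ac])
  also have "char_matrix A 0 = A" by (rule eq_matI) (use Ac in \<open>auto simp: char_matrix_def\<close>)
  also have "det (- A) = 0"
  proof -
    define B where "B = transpose_mat (- A)"
    have Bc: "B \<in> carrier_mat n n" unfolding B_def using Ac by simp
    define v where "v = vec n (\<lambda>_. 1::real)"
    have v: "v \<in> carrier_vec n" "v \<noteq> 0\<^sub>v n"
      unfolding v_def using n by (auto simp: vec_eq_iff)
    have "B *\<^sub>v v = 0\<^sub>v n"
    proof (rule eq_vecI)
      fix c assume "c < dim_vec (0\<^sub>v n :: real vec)"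
      then have c: "c < n" by simp
      have "(B *\<^sub>v v) $ c = (\<Sum>i<n. - A $$ (i, c))"
        using c Ac by (simp add: B_def v_def scalar_prod_def atLeast0LessThan)
      also have "\<dots> = - (\<Sum>i<n. A $$ (i, c))" by (simp add: sum_negf)
      also have "\<dots> = 0" unfolding A_def using comp_matrix_column_sum[OF E nl c] by simp
      finally show "(B *\<^sub>v v) $ c = 0\<^sub>v n $ c" using c by simp
    qed (use Bc in simp)
    then have "det B = 0" using det_0_iff_vec_prod_zero[OF Bc] v by blast
    then show ?thesis unfolding B_def using det_transpose[of "- A" n] Ac by simp
  qed
  finally show ?thesis .
qed

section \<open>Off-diagonal minors and paths in the graph\<close>

definition replace_row_unit :: "'a::zero_neq_one mat \<Rightarrow> nat \<Rightarrow> nat \<Rightarrow> 'a mat" where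
  "replace_row_unit A a b =
     mat (dim_row A) (dim_col A) (\<lambda>(r, c). if r = a then (if c = b then 1 else 0) else A $$ (r, c))"

lemma det_mat_delete_replace_row_unit:
  fixes A :: "'a::comm_ring_1 mat"
  assumes A: "A \<in> carrier_mat n n" and ab: "a < n" "b < n"
  shows "det (mat_delete A a b) = (-1) ^ (a + b) * det (replace_row_unit A a b)"
proof -
  let ?M = "replace_row_unit A a b"
  have M: "?M \<in> carrier_mat n n" using A by (simp add: replace_row_unit_def)
  have "det ?M = (\<Sum>c<n. ?M $$ (a, c) * cofactor ?M a c)"
    by (rule laplace_expansion_row[OF M ab(1)])
  also have "\<dots> = (\<Sum>c<n. if c = b then cofactor ?M a c else 0)"
    using A ab by (intro sum.cong) (auto simp: replace_row_unit_def)
  also have "\<dots> = cofactor ?M a b" using ab by simp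
  also have "mat_delete ?M a b = mat_delete A a b"
    by (rule eq_matI) (use A in \<open>auto simp: mat_delete_def replace_row_unit_def\<close>)
  then have "cofactor ?M a b = (-1) ^ (a + b) * det (mat_delete A a b)" unfolding cofactor_def by simp
  finally have "(-1) ^ (a + b) * det ?M = ((-1) ^ (a + b) * (-1) ^ (a + b)) * det (mat_delete A a b)"
    by (simp add: mult.assoc)
  also have "(-1::'a) ^ (a + b) * (-1) ^ (a + b) = 1"
    by (simp add: power_add[symmetric] flip: power_mult_distrib)
  finally show ?thesis by simp
qed

text \<open>Following the cycle of \<open>\<sigma>\<close> through \<open>a\<close> backwards from \<open>b = \<sigma> a\<close> gives a walk from
  \<open>a\<close> to \<open>b\<close> whose vertices are all moved by \<open>\<sigma>\<close>, except \<open>a\<close> itself.\<close>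
lemma permutation_cycle_walk:
  assumes \<sigma>: "\<sigma> permutes S" and S: "finite S" and a: "a \<in> S" and ab: "\<sigma> a = b" "a \<noteq> b"
    and edge: "\<And>r. r \<in> S \<Longrightarrow> r \<noteq> a \<Longrightarrow> \<sigma> r \<noteq> r \<Longrightarrow> (f (\<sigma> r), f r) \<in> E"
  shows "\<exists>p. (f a, f b) \<in> E ^^ p \<and> p < card {r \<in> S. r = a \<or> \<sigma> r \<noteq> r}"
proof -
  have perm: "permutation \<sigma>" using \<sigma> S permutation_permutes by blast
  have "b \<in> orbit \<sigma> a" using orbit.base[of \<sigma> a] ab(1) by simp
  then have in_orbit: "a \<in> orbit \<sigma> b" by (rule orbit_swap[OF permutation_self_in_orbit[OF perm]])
  define p where "p = funpow_dist \<sigma> b a"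
  define c where "c m = (\<sigma> ^^ m) b" for m
  have c_p: "c p = a" unfolding c_def p_def by (rule funpow_dist_prop[OF in_orbit])
  have c_inj: "inj_on c {0..p}" unfolding c_def p_def by (rule inj_on_funpow_dist[OF in_orbit])
  have c_not_a: "c m \<noteq> a" if "m < p" for m
    unfolding c_def using funpow_dist_least[of m \<sigma> b a] that by (simp add: p_def)
  have c_in: "c m \<in> S" for m
  proof (induction m)
    case 0
    have "\<sigma> a \<in> S" using permutes_in_image[OF \<sigma>] a by simp
    then show ?case using ab(1) by (simp add: c_def)
  next
    case (Suc m)
    then show ?case using permutes_in_image[OF \<sigma>] by (simp add: c_def)
  qed
  have c_Suc: "c (Suc m) = \<sigma> (c m)" for m by (simp add: c_def)
  have moved: "\<sigma> (c m) \<noteq> c m" if "m < p" for m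
    using inj_onD[OF c_inj, of "Suc m" m] that by (auto simp: c_Suc)
  have walk: "(f (c m), f b) \<in> E ^^ m" if "m \<le> p" for m
    using that
  proof (induction m)
    case 0
    then show ?case by (simp add: c_def)
  next
    case (Suc m)
    then have "(f (c (Suc m)), f (c m)) \<in> E"
      unfolding c_Suc using edge c_in c_not_a moved by simp
    moreover have "(f (c m), f b) \<in> E ^^ m" using Suc by simp
    ultimately show ?case by (rule relpow_Suc_I2)
  qed
  have "c ` {0..p} \<subseteq> {r \<in> S. r = a \<or> \<sigma> r \<noteq> r}"
    using c_in c_p moved by (auto simp: le_less)
  then have "card (c ` {0..p}) \<le> card {r \<in> S. r = a \<or> \<sigma> r \<noteq> r}"
    using S by (intro card_mono) auto
  then have "p < card {r \<in> S. r = a \<or> \<sigma> r \<noteq> r}" using card_image[OF c_inj] by simp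
  then show ?thesis using walk[of p] c_p by auto
qed

lemma replace_row_unit_dI_minus_A_entry:
  "r < n \<Longrightarrow> c < n \<Longrightarrow> replace_row_unit (dI_minus_A n E Lk \<theta>) a b $$ (r, c) = (if r = a
    then (if c = b then 1 else 0)
    else (if r = c then [:0, 1:] else 0) - [:comp_matrix n E Lk \<theta> $$ (r, c):])"
  by (simp add: replace_row_unit_def dI_minus_A_entry dI_minus_A_def)

lemma degree_perm_term_le:
  assumes \<sigma>: "\<sigma> permutes {0..<n}"
  shows "degree (\<Prod>r = 0..<n. replace_row_unit (dI_minus_A n E Lk \<theta>) a b $$ (r, \<sigma> r))
    \<le> n - card {r \<in> {0..<n}. r = a \<or> \<sigma> r \<noteq> r}"
proof -
  let ?M = "replace_row_unit (dI_minus_A n E Lk \<theta>) a b"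
  have degree_factor: "degree (?M $$ (r, \<sigma> r)) \<le> (if r \<noteq> a \<and> \<sigma> r = r then 1 else 0)"
    if "r < n" for r
  proof -
    have "degree ([:0, 1:] - [:x:]) \<le> 1" for x :: real
      by (rule order.trans[OF degree_diff_le]) auto
    moreover have "\<sigma> r < n" using permutes_in_image[OF \<sigma>] that by simp
    ultimately show ?thesis using that by (auto simp: replace_row_unit_dI_minus_A_entry)
  qed
  have "degree (\<Prod>r = 0..<n. ?M $$ (r, \<sigma> r)) \<le> (\<Sum>r = 0..<n. degree (?M $$ (r, \<sigma> r)))"
    using degree_prod_sum_le[of "{0..<n}" "\<lambda>r. ?M $$ (r, \<sigma> r)"] by (simp add: o_def)
  also have "\<dots> \<le> (\<Sum>r = 0..<n. if r \<noteq> a \<and> \<sigma> r = r then 1 else 0)"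
    by (rule sum_mono) (simp add: degree_factor)
  also have "\<dots> = card {r \<in> {0..<n}. r \<noteq> a \<and> \<sigma> r = r}"
    by (simp add: sum.If_cases Int_def)
  also have "\<dots> = card ({0..<n} - {r \<in> {0..<n}. r = a \<or> \<sigma> r \<noteq> r})"
    by (rule arg_cong[where f = card]) auto
  also have "\<dots> = n - card {r \<in> {0..<n}. r = a \<or> \<sigma> r \<noteq> r}"
    by (subst card_Diff_subset) auto
  finally show ?thesis .
qed

lemma perm_term_walk:
  assumes \<sigma>: "\<sigma> permutes {0..<n}" and ab: "a < n" "b < n" "a \<noteq> b"
    and nonzero: "(\<Prod>r = 0..<n. replace_row_unit (dI_minus_A n E Lk \<theta>) a b $$ (r, \<sigma> r)) \<noteq> 0"
  shows "\<exists>p. (Suc a, Suc b) \<in> E ^^ p \<and> p < card {r \<in> {0..<n}. r = a \<or> \<sigma> r \<noteq> r}"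
proof -
  let ?M = "replace_row_unit (dI_minus_A n E Lk \<theta>) a b"
  have \<sigma>_lt: "\<sigma> r < n" if "r < n" for r using permutes_in_image[OF \<sigma>] that by simp
  have factor_nonzero: "?M $$ (r, \<sigma> r) \<noteq> 0" if "r < n" for r
    using nonzero that by auto
  have "\<sigma> a = b"
    using factor_nonzero[OF ab(1)] \<sigma>_lt[OF ab(1)] ab
    by (auto simp: replace_row_unit_dI_minus_A_entry split: if_splits)
  moreover have "(Suc (\<sigma> r), Suc r) \<in> E" if "r \<in> {0..<n}" "r \<noteq> a" "\<sigma> r \<noteq> r" for r
  proof (rule ccontr)
    assume "(Suc (\<sigma> r), Suc r) \<notin> E"
    then have "comp_matrix n E Lk \<theta> $$ (r, \<sigma> r) = 0"
      using that \<sigma>_lt[of r] by (simp add: comp_matrix_def Let_def)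
    then show False
      using factor_nonzero[of r] \<sigma>_lt[of r] that by (simp add: replace_row_unit_dI_minus_A_entry)
  qed
  ultimately show ?thesis
    using permutation_cycle_walk[OF \<sigma> finite_atLeastLessThan, of a b Suc E] ab by auto
qed

lemma degree_perm_term_off_diagonal:
  assumes \<sigma>: "\<sigma> permutes {0..<n}" and ab: "a < n" "b < n" "a \<noteq> b"
    and nonzero: "(\<Prod>r = 0..<n. replace_row_unit (dI_minus_A n E Lk \<theta>) a b $$ (r, \<sigma> r)) \<noteq> 0"
  shows "degree (\<Prod>r = 0..<n. replace_row_unit (dI_minus_A n E Lk \<theta>) a b $$ (r, \<sigma> r))
    + shortest_path_length E (Suc a) (Suc b) < n"
proof -
  obtain p where walk: "(Suc a, Suc b) \<in> E ^^ p"
    and p: "p < card {r \<in> {0..<n}. r = a \<or> \<sigma> r \<noteq> r}"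
    using perm_term_walk[OF \<sigma> ab nonzero] by blast
  have "shortest_path_length E (Suc a) (Suc b) \<le> p"
    unfolding shortest_path_length_def by (rule Least_le) (rule walk)
  moreover have "card {r \<in> {0..<n}. r = a \<or> \<sigma> r \<noteq> r} \<le> card {0..<n}"
    by (rule card_mono) auto
  ultimately show ?thesis
    using degree_perm_term_le[OF \<sigma>, where E = E and Lk = Lk and \<theta> = \<theta> and a = a and b = b] p
    by simp
qed

lemma coeff_neg_one_power_mult: "coeff ((-1) ^ m * q) k = (-1) ^ m * coeff q (k :: nat)"
  for q :: "'a::comm_ring_1 poly"
  by (induction m) auto

lemma coeff_det_off_diagonal_minor:
  assumes ab: "a < n" "b < n" "a \<noteq> b" and k: "n \<le> k + shortest_path_length E (Suc a) (Suc b)"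
  shows "coeff (det (mat_delete (dI_minus_A n E Lk \<theta>) a b)) k = 0"
proof -
  let ?M = "replace_row_unit (dI_minus_A n E Lk \<theta>) a b"
  have M: "?M \<in> carrier_mat n n" by (simp add: replace_row_unit_def dI_minus_A_def)
  have "coeff (det ?M) k
      = (\<Sum>\<sigma>\<in>{\<sigma>. \<sigma> permutes {0..<n}}. coeff (signof \<sigma> * (\<Prod>r = 0..<n. ?M $$ (r, \<sigma> r))) k)"
    unfolding det_def'[OF M] by (simp add: coeff_sum)
  also have "\<dots> = 0"
  proof (rule sum.neutral, rule ballI)
    fix \<sigma> assume "\<sigma> \<in> {\<sigma>. \<sigma> permutes {0..<n}}"
    then have \<sigma>: "\<sigma> permutes {0..<n}" by simp
    show "coeff (signof \<sigma> * (\<Prod>r = 0..<n. ?M $$ (r, \<sigma> r))) k = 0"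
    proof (cases "(\<Prod>r = 0..<n. ?M $$ (r, \<sigma> r)) = 0")
      case False
      then have "degree (\<Prod>r = 0..<n. ?M $$ (r, \<sigma> r)) < k"
        using degree_perm_term_off_diagonal[OF \<sigma> ab] k by fastforce
      then show ?thesis by (intro coeff_eq_0) (simp add: degree_signof_mult)
    next
      case True
      show ?thesis by (simp add: True)
    qed
  qed
  finally show ?thesis
    using det_mat_delete_replace_row_unit[OF dI_minus_A_carrier ab(1,2)]
    by (simp add: coeff_neg_one_power_mult)
qed

section \<open>Counting the non-constant coefficients\<close>

lemma nonconst_lhs_index:
  assumes E: "E \<subseteq> {1..n} \<times> {1..n}" and loopless: "\<forall>k. (k, k) \<notin> E" and n: "n > 0"
    and idx: "(j, None, k) \<in> nonconst_indices n E Inp Outp Lk"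
  shows "k < n \<and> (Lk = {} \<longrightarrow> 0 < k)"
proof -
  have k: "k \<le> n" using idx unfolding nonconst_indices_def io_coeff_indices_def by auto
  obtain \<theta> \<theta>' where differ: "coeff (det (dI_minus_A n E Lk \<theta>)) k \<noteq> coeff (det (dI_minus_A n E Lk \<theta>')) k"
    using idx unfolding nonconst_indices_def io_coeff_def by auto
  then have "k \<noteq> n" using coeff_det_dI_minus_A_top by metis
  moreover have "0 < k" if "Lk = {}"
  proof (rule ccontr)
    assume "\<not> 0 < k"
    then show False using differ coeff_0_det_dI_minus_A_no_leaks[OF E loopless n] that by simp
  qed
  ultimately show ?thesis using k by auto
qed

lemma nonconst_rhs_index:
  assumes E: "E \<subseteq> {1..n} \<times> {1..n}" and i0: "i0 \<in> {1..n}" and j0: "j0 \<in> {1..n}"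
    and idx: "(j0, Some i0, k) \<in> nonconst_indices n E Inp Outp Lk"
  shows "if i0 = j0 then k < n - 1 else k + shortest_path_length E i0 j0 < n"
proof -
  obtain \<theta> \<theta>' where differ:
    "coeff (det (mat_delete (dI_minus_A n E Lk \<theta>) (i0 - 1) (j0 - 1))) k
      \<noteq> coeff (det (mat_delete (dI_minus_A n E Lk \<theta>') (i0 - 1) (j0 - 1))) k"
    using idx unfolding nonconst_indices_def io_coeff_def by (auto simp: coeff_neg_one_power_mult)
  show ?thesis
  proof (cases "i0 = j0")
    case True
    have "k < n - 1"
    proof (rule ccontr)
      assume "\<not> k < n - 1"
      then show False
        using differ coeff_det_principal_minor[where a = "i0 - 1" and n = n and E = E and Lk = Lk] i0 True
        by (cases "k = n - 1") auto
    qed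
    then show ?thesis using True by simp
  next
    case False
    have "k + shortest_path_length E i0 j0 < n"
    proof (rule ccontr)
      assume "\<not> k + shortest_path_length E i0 j0 < n"
      then have "n \<le> k + shortest_path_length E (Suc (i0 - 1)) (Suc (j0 - 1))" using i0 j0 by simp
      then show False
        using differ coeff_det_off_diagonal_minor[where a = "i0 - 1" and b = "j0 - 1" and n = n
            and k = k and E = E and Lk = Lk] i0 j0 False by auto
    qed
    then show ?thesis using False by simp
  qed
qed

lemma nonconst_indices_subset:
  assumes model: "compartmental_model n E {i0} {j0} Lk"
  shows "nonconst_indices n E {i0} {j0} Lk
    \<subseteq> (\<lambda>k. (j0, None, k)) ` {k. k < n \<and> (Lk = {} \<longrightarrow> 0 < k)}
      \<union> (\<lambda>k. (j0, Some i0, k)) ` {k. if i0 = j0 then k < n - 1 else k + shortest_path_length E i0 j0 < n}"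
proof
  have E: "E \<subseteq> {1..n} \<times> {1..n}" and loopless: "\<forall>k. (k, k) \<notin> E"
    and i0: "i0 \<in> {1..n}" and j0: "j0 \<in> {1..n}"
    using model unfolding compartmental_model_def by auto
  fix idx assume idx: "idx \<in> nonconst_indices n E {i0} {j0} Lk"
  then obtain jo k where "idx = (j0, jo, k)" and "jo = None \<or> jo = Some i0"
    unfolding nonconst_indices_def io_coeff_indices_def by auto
  then consider (lhs) "idx = (j0, None, k)" | (rhs) "idx = (j0, Some i0, k)" by blast
  then show "idx \<in> (\<lambda>k. (j0, None, k)) ` {k. k < n \<and> (Lk = {} \<longrightarrow> 0 < k)}
      \<union> (\<lambda>k. (j0, Some i0, k)) ` {k. if i0 = j0 then k < n - 1 else k + shortest_path_length E i0 j0 < n}"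
  proof cases
    case lhs
    then show ?thesis using nonconst_lhs_index[OF E loopless _ idx[unfolded lhs]] i0 by auto
  next
    case rhs
    then show ?thesis using nonconst_rhs_index[OF E i0 j0 idx[unfolded rhs]] by auto
  qed
qed

lemma card_nonconst_indices_le:
  assumes model: "compartmental_model n E {i0} {j0} Lk"
  shows "card (nonconst_indices n E {i0} {j0} Lk)
    \<le> (if Lk = {} then n - 1 else n) + (if i0 = j0 then n - 1 else n - shortest_path_length E i0 j0)"
proof -
  define lhs where "lhs = {k. k < n \<and> (Lk = {} \<longrightarrow> 0 < k)}"
  define rhs where "rhs = {k. if i0 = j0 then k < n - 1 else k + shortest_path_length E i0 j0 < n}"
  have lhs: "lhs = (if Lk = {} then {1..<n} else {..<n})" unfolding lhs_def by auto
  have rhs: "rhs = (if i0 = j0 then {..<n - 1} else {..<n - shortest_path_length E i0 j0})"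
    unfolding rhs_def by auto
  have card_lhs: "card lhs = (if Lk = {} then n - 1 else n)" by (simp add: lhs)
  have card_rhs: "card rhs = (if i0 = j0 then n - 1 else n - shortest_path_length E i0 j0)"
    by (simp add: rhs)
  have "card (nonconst_indices n E {i0} {j0} Lk)
      \<le> card ((\<lambda>k. (j0, None, k)) ` lhs \<union> (\<lambda>k. (j0, Some i0, k)) ` rhs)"
    using nonconst_indices_subset[OF model] unfolding lhs_def[symmetric] rhs_def[symmetric]
    by (rule card_mono[rotated]) (simp add: lhs rhs)
  also have "\<dots> \<le> card lhs + card rhs"
    by (rule order.trans[OF card_Un_le add_mono[OF card_image_le card_image_le]]) (simp_all add: lhs rhs)
  finally show ?thesis unfolding card_lhs card_rhs .
qed

lemma card_edges_ge_if_strongly_connected: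
  assumes E: "E \<subseteq> {1..n} \<times> {1..n}" and sc: "strongly_connected n E" and n: "2 \<le> n"
  shows "n \<le> card E"
proof -
  have fE: "finite E" by (rule finite_subset[OF E]) simp
  have out: "\<exists>w. (u, w) \<in> E" if u: "u \<in> {1..n}" for u
  proof -
    define v where "v = (if u = 1 then 2 else 1 :: nat)"
    have v: "v \<in> {1..n}" "v \<noteq> u" using u n unfolding v_def by auto
    then have "(u, v) \<in> E\<^sup>*" using sc u unfolding strongly_connected_def by blast
    then show ?thesis using v(2) by (cases rule: converse_rtranclE) auto
  qed
  define f where "f u = (u, SOME w. (u, w) \<in> E)" for u
  have "f ` {1..n} \<subseteq> E" unfolding f_def using out by (auto intro: someI_ex)
  moreover have "inj_on f {1..n}" unfolding f_def by (auto simp: inj_on_def)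
  ultimately have "card {1..n} \<le> card E" using card_inj_on_le fE by blast
  then show ?thesis by simp
qed

lemma card_nonconst_indices_lt_card_params:
  assumes model: "compartmental_model n E Inp Outp Lk"
    and sc: "strongly_connected n E"
    and inp: "Inp = {i0}" and outp: "Outp = {j0}"
    and cond: "(Lk \<noteq> {} \<and> Inp = Outp \<and> int (card E + card Lk) > 2 * int n - 1)
             \<or> (Lk \<noteq> {} \<and> Inp \<noteq> Outp \<and>
                  int (card E + card Lk) > 2 * int n - int (shortest_path_length E i0 j0))
             \<or> (Lk = {} \<and> Inp = Outp \<and> int (card E) > 2 * int n - 2)
             \<or> (Lk = {} \<and> Inp \<noteq> Outp \<and>
                  int (card E) > 2 * int n - int (shortest_path_length E i0 j0) - 1)"
  shows "card (nonconst_indices n E Inp Outp Lk) < card E + card Lk"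
proof -
  define L where "L = shortest_path_length E i0 j0"
  have E: "E \<subseteq> {1..n} \<times> {1..n}" and i0: "i0 \<in> {1..n}" and j0: "j0 \<in> {1..n}"
    and finite_Lk: "finite Lk"
    using model inp outp finite_subset[of Lk "{1..n}"] unfolding compartmental_model_def by auto
  have bound: "card (nonconst_indices n E Inp Outp Lk)
      \<le> (if Lk = {} then n - 1 else n) + (if i0 = j0 then n - 1 else n - L)"
    using card_nonconst_indices_le[of n E i0 j0 Lk] model unfolding inp outp L_def by simp
  have io: "Inp = Outp \<longleftrightarrow> i0 = j0" using inp outp by auto
  have n: "n \<ge> 1" using i0 by simp
  have card_E: "n \<le> card E" if "i0 \<noteq> j0"
    using card_edges_ge_if_strongly_connected[OF E sc] i0 j0 that by auto
  have card_Lk: "card Lk \<ge> 1" if "Lk \<noteq> {}" using that finite_Lk by (simp add: Suc_le_eq card_gt_0_iff)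
  show ?thesis
  proof (cases "i0 \<noteq> j0 \<and> n < L")
    case True
    then have "(if Lk = {} then n - 1 else n) < card E + card Lk"
      using card_E card_Lk n by (cases "Lk = {}") auto
    then show ?thesis using bound True by simp
  next
    case False
    then have "int ((if Lk = {} then n - 1 else n) + (if i0 = j0 then n - 1 else n - L))
        < int (card E + card Lk)"
      using cond n unfolding io L_def[symmetric] by (auto simp: of_nat_diff)
    then show ?thesis using bound by linarith
  qed
qed

lemma restrict_eq_iff: "restrict f A = restrict g A \<longleftrightarrow> (\<forall>x\<in>A. f x = g x)"
  by (metis restrict_apply' restrict_ext)

lemma unidentifiable_if_few_nonconst_coeffs:
  assumes model: "compartmental_model n E Inp Outp Lk"
    and few: "card (nonconst_indices n E Inp Outp Lk) < card E + card Lk"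
  shows "unidentifiable n E Inp Outp Lk"
proof -
  let ?P = "param_labels E Lk" and ?I = "nonconst_indices n E Inp Outp Lk"
  have "E \<subseteq> {1..n} \<times> {1..n}" "Lk \<subseteq> {1..n}" "Inp \<subseteq> {1..n}" "Outp \<subseteq> {1..n}"
    using model unfolding compartmental_model_def by auto
  then have finite: "finite E" "finite Lk" "finite Inp" "finite Outp"
    by (auto intro: finite_subset)
  have finite_P: "finite ?P" using finite_param_labels[OF finite(1,2)] .
  have "?I \<subseteq> io_coeff_indices n Inp Outp" unfolding nonconst_indices_def by blast
  moreover have "finite (io_coeff_indices n Inp Outp)"
    unfolding io_coeff_indices_def using finite(3,4) by simp
  ultimately have finite_I: "finite ?I" by (rule finite_subset)
  have card: "card ?I < card ?P" using few card_param_labels[OF finite(1,2)] by simp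
  have poly: "poly_fun ?P (io_coeff n E Lk idx)" if "idx \<in> ?I" for idx
    using poly_fun_io_coeff[OF finite(1)] .
  obtain f where f: "poly_fun ?P f" "\<exists>\<theta>\<in>?P \<rightarrow>\<^sub>E UNIV. f \<theta> \<noteq> 0"
    "\<forall>\<theta>\<in>?P \<rightarrow>\<^sub>E UNIV. f \<theta> \<noteq> 0 \<longrightarrow>
        infinite {\<theta>' \<in> ?P \<rightarrow>\<^sub>E UNIV. \<forall>idx\<in>?I. io_coeff n E Lk idx \<theta>' = io_coeff n E Lk idx \<theta>}"
    using generic_infinite_fibres[where c = "io_coeff n E Lk", OF finite_P finite_I card poly] by blast
  have fibre: "{\<theta>' \<in> param_space E Lk. coeff_map n E Inp Outp Lk \<theta>' = coeff_map n E Inp Outp Lk \<theta>}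
      = {\<theta>' \<in> ?P \<rightarrow>\<^sub>E UNIV. \<forall>idx\<in>?I. io_coeff n E Lk idx \<theta>' = io_coeff n E Lk idx \<theta>}" for \<theta>
    unfolding param_space_def coeff_map_def restrict_eq_iff ..
  show ?thesis
    unfolding unidentifiable_def generically_def fibre using f unfolding param_space_def by blast
qed

theorem corollary3p5:
  fixes n :: nat and E :: "(nat \<times> nat) set" and Inp Outp Lk :: "nat set"
    and i0 j0 :: nat
  assumes model: "compartmental_model n E Inp Outp Lk"
    and sc: "strongly_connected n E"
    and inp: "Inp = {i0}" and outp: "Outp = {j0}"
    and cond: "(Lk \<noteq> {} \<and> Inp = Outp \<and> int (card E + card Lk) > 2 * int n - 1)
             \<or> (Lk \<noteq> {} \<and> Inp \<noteq> Outp \<and>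
                  int (card E + card Lk) > 2 * int n - int (shortest_path_length E i0 j0))
             \<or> (Lk = {} \<and> Inp = Outp \<and> int (card E) > 2 * int n - 2)
             \<or> (Lk = {} \<and> Inp \<noteq> Outp \<and>
                  int (card E) > 2 * int n - int (shortest_path_length E i0 j0) - 1)"
  shows "unidentifiable n E Inp Outp Lk"
  using model card_nonconst_indices_lt_card_params[OF model sc inp outp cond]
  by (rule unidentifiable_if_few_nonconst_coeffs)

end
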